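(* Fix $R_{\rm eff}>0$ and suppose that all link SNRs over all links and slots are i.i.d. with the noncentral chi-squared CDF $F(\gamma;v,\lambda)=1-Q_{v/2}(\sqrt\lambda,\sqrt\gamma)$, $\gamma\ge0$, with degrees of freedom $v>0$ and non-centrality $\lambda\ge0$. Then: (i) (Rayleigh fading: $v=2$, $\lambda=0$, i.e. density $e^{-\gamma/2}/2$) $\bar J^{\text{no relay}}_K(R_{\rm eff})=\infty$ for all $K\ge1$, while $\bar J_K(R_{\rm eff})<\infty$ for all $K\ge2$; (ii) (Rician fading: $v=2$, $\lambda>0$) $\bar J^{\text{no relay}}_K(R_{\rm eff})=\infty$ for all $K\ge1$, while $\bar J_K(R_{\rm eff})<\infty$ for all $K\ge2$; (iii) ($v=2s$ with an integer $s\ge2$, any $\lambda\ge0$) $\bar J^{\text{no relay}}_K(R_{\rm eff})<\infty$ for all $K\ge1$ and $\bar J_K(R_{\rm eff})<\infty$ for all $K\ge2$.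
   Context: $Q_M(a,b)=\int_b^\infty x(x/a)^{M-1}e^{-(x^2+a^2)/2}I_{M-1}(ax)\,dx$ is the generalized Marcum Q-function (with $I_{M-1}$ the modified Bessel function of the first kind; for $a=0$ take the limit). Notation: $I(x)=\log(1+x)$, $I^{-1}(x)=e^x-1$, $\tilde\gamma_k=\max(\gamma^{SD}_k,\gamma^{RD}_k)$. Relay problem with $K$ slots and message size $B=KR_{\rm eff}$ nats: in slot $k$ the link SNRs are $(\gamma^{SR}_k,\gamma^{SD}_k,\gamma^{RD}_k)$; a power $p_k\ge0$ is chosen causally (as a function of the SNRs of slots $1,\dots,k$). Remaining information: $b^R_1=b^D_1=B$; if $b^R_k>0$ (Phase 1, the source transmits) then $b^R_{k+1}=b^R_k-I(p_k\gamma^{SR}_k)$, $b^D_{k+1}=b^D_k-I(p_k\gamma^{SD}_k)$; if $b^R_k\le0$ (Phase 2, whichever of source/relay has the larger SNR to the destination transmits) then $b^R_{k+1}=b^R_k$, $b^D_{k+1}=b^D_k-I(p_k\tilde\gamma_k)$. The constraint is $b^D_{K+1}\le0$ a.s. The NMESE is $\bar J_K(R_{\rm eff})=\frac1K\mathbb{E}_{\boldsymbol\gamma_1}[J^\star(\boldsymbol\gamma_1)]$, where $J^\star(\boldsymbol\gamma_1)$ is the infimum over causal feasible policies of $\mathbb{E}[\sum_{k=1}^Kp_k\mid\boldsymbol\gamma_1]$. "No relaying" means the same problem with $\gamma^{SR}_k\equiv0$ (constraint $\sum_kI(p_k\gamma^{SD}_k)\ge B$); its NMESE is $\bar J^{\text{no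 relay}}_K(R_{\rm eff})$. *)

theory Defs
  imports "HOL-Probability.Probability"
begin

definition bessel_I :: "real \<Rightarrow> real \<Rightarrow> real" where
  "bessel_I nu x = (\<Sum>k. (x / 2) powr (2 * real k + nu) / (fact k * Gamma (real k + nu + 1)))"

text \<open>Generalized Marcum Q-function; for a = 0 the integrand is replaced by its limit
  (x/a)^(M-1) I_(M-1)(a x) \<rightarrow> x^(2M-2) / (2^(M-1) Gamma M).\<close>
definition marcumQ :: "real \<Rightarrow> real \<Rightarrow> real \<Rightarrow> real" where
  "marcumQ M a b =
     (if a = 0 then
        (\<integral>x\<in>{b..}. x * (x powr (2 * M - 2) / (2 powr (M - 1) * Gamma M)) * exp (- (x\<^sup>2) / 2) \<partial>lborel)
      else
        (\<integral>x\<in>{b..}. x * (x / a) powr (M - 1) * exp (- (x\<^sup>2 + a\<^sup>2) / 2) * bessel_I (M - 1) (a * x) \<partial>lborel))"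

definition ncx2_dist :: "real \<Rightarrow> real \<Rightarrow> real measure \<Rightarrow> bool" where
  "ncx2_dist v lam D \<longleftrightarrow> v > 0 \<and> lam \<ge> 0 \<and> prob_space D \<and> sets D = sets borel \<and>
     (\<forall>g::real. measure D {..g} = (if g < 0 then 0 else 1 - marcumQ (v / 2) (sqrt lam) (sqrt g)))"

text \<open>SNRs of one slot: (gamma_SR, gamma_SD, gamma_RD). Slots are indexed 0..K-1
  (slot k here is slot k+1 of the paper).\<close>
type_synonym snr = "real \<times> real \<times> real"

text \<open>Remaining information (b^R, b^D) before slot k, for powers P and SNRs g.\<close>
fun remaining :: "real \<Rightarrow> (nat \<Rightarrow> real) \<Rightarrow> (nat \<Rightarrow> snr) \<Rightarrow> nat \<Rightarrow> real \<times> real" where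
  "remaining B P g 0 = (B, B)"
| "remaining B P g (Suc k) =
     (let (bR, bD) = remaining B P g k; (sr, sd, rd) = g k in
      if bR > 0 then (bR - ln (1 + P k * sr), bD - ln (1 + P k * sd))
      else (bR, bD - ln (1 + P k * max sd rd)))"

text \<open>A policy p: power p k g in slot k as a function of the whole SNR sequence g;
  causality = p k g depends only on g 0, ..., g k.\<close>
definition causal_policy :: "(nat \<Rightarrow> (nat \<Rightarrow> snr) \<Rightarrow> real) \<Rightarrow> bool" where
  "causal_policy p \<longleftrightarrow> (\<forall>k g g'. (\<forall>j\<le>k. g j = g' j) \<longrightarrow> p k g = p k g')"

text \<open>Admissible policies given first-slot SNRs g1, for K slots, message size B, slot
  SNR law S (the slots are i.i.d. with law S): nonnegative, causal, measurable powers such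
  that the destination decodes (b^D_(K+1) \<le> 0) almost surely given g1.\<close>
definition admissible ::
  "nat \<Rightarrow> real \<Rightarrow> snr measure \<Rightarrow> snr \<Rightarrow> (nat \<Rightarrow> (nat \<Rightarrow> snr) \<Rightarrow> real) \<Rightarrow> bool" where
  "admissible K B S g1 p \<longleftrightarrow>
     (\<forall>k<K. \<forall>g. p k g \<ge> 0) \<and> causal_policy p \<and>
     (\<forall>k<K. p k \<in> borel_measurable (PiM {..<K} (\<lambda>_. S))) \<and>
     (AE g in PiM {1..<K} (\<lambda>_. S).
        snd (remaining B (\<lambda>k. p k (g(0 := g1))) (g(0 := g1)) K) \<le> 0)"

definition Jstar :: "nat \<Rightarrow> real \<Rightarrow> snr measure \<Rightarrow> snr \<Rightarrow> ennreal" where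
  "Jstar K B S g1 = (INF p \<in> {p. admissible K B S g1 p}.
      \<integral>\<^sup>+ g. ennreal (\<Sum>k<K. p k (g(0 := g1))) \<partial>(PiM {1..<K} (\<lambda>_. S)))"

definition nmese :: "nat \<Rightarrow> real \<Rightarrow> snr measure \<Rightarrow> ennreal" where
  "nmese K Reff S = ennreal (1 / real K) * (\<integral>\<^sup>+ g1. Jstar K (real K * Reff) S g1 \<partial>S)"

definition relay_slot :: "real measure \<Rightarrow> snr measure" where
  "relay_slot D = D \<Otimes>\<^sub>M (D \<Otimes>\<^sub>M D)"

text \<open>No relaying: the same problem with gamma_SR identically 0.\<close>
definition no_relay_slot :: "real measure \<Rightarrow> snr measure" where
  "no_relay_slot D = return borel 0 \<Otimes>\<^sub>M (D \<Otimes>\<^sub>M D)"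

end

theory Submission
  imports Defs
begin

text \<open>For integer order the Marcum integrand is a Poisson mixture of chi densities, so the
  noncentral chi-squared CDF satisfies \<open>F(t) \<ge> c t\<close> near 0 when \<open>v = 2\<close>, and \<open>F(t) \<le> t\<^sup>s\<close> when
  \<open>v = 2s\<close>. Splitting \<open>[0, 1]\<close> dyadically, \<open>E[1/\<gamma>]\<close> is finite if \<open>P(\<gamma> \<le> t) = O(t\<^sup>2)\<close> and infinite
  if \<open>P(\<gamma> \<le> t) \<ge> c t\<close>.
  Inverting the channel costs \<open>(e\<^sup>B - 1)/\<gamma>\<close>. With a relay, two slots suffice: invert the better
  source link, then the better link into the destination; each is a maximum of two i.i.d. SNRs,
  whose CDF is \<open>O(t\<^sup>2)\<close>, so the expected energy is finite. Without a relay the single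
  source-destination link is inverted in the first slot, which is cheap enough when \<open>s \<ge> 2\<close>.
  Conversely, for \<open>v = 2\<close> every later slot has \<open>E[1/\<gamma>] = \<infinity>\<close>, so a causal policy cannot leave
  anything for them and must pay \<open>(e\<^sup>B - 1)/\<gamma>\<^sub>1\<close>, whose expectation is infinite too.\<close>

section \<open>The Marcum Q-function of integer order as a Poisson mixture\<close>

text \<open>Density of the square root of a chi-squared variable with \<open>2 (n + 1)\<close> degrees of freedom.\<close>
definition chi_density :: "nat \<Rightarrow> real \<Rightarrow> real" where
  "chi_density n x = indicator {0..} x * (x ^ (2 * n + 1) * exp (- (x\<^sup>2) / 2)) / (2 ^ n * fact n)"

definition poisson_weight :: "real \<Rightarrow> nat \<Rightarrow> real" where
  "poisson_weight a k = exp (- (a\<^sup>2) / 2) * (a\<^sup>2 / 2) ^ k / fact k"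

text \<open>On \<open>(0, \<infinity>)\<close> this is the integrand of \<open>marcumQ (m + 1) a\<close>: expanding the Bessel series term
  by term gives a Poisson(\<open>a\<^sup>2/2\<close>) mixture of chi densities.\<close>
definition marcum_density :: "nat \<Rightarrow> real \<Rightarrow> real \<Rightarrow> real" where
  "marcum_density m a x = (\<Sum>k. poisson_weight a k * chi_density (k + m) x)"

definition marcumQ_integrand :: "real \<Rightarrow> real \<Rightarrow> real \<Rightarrow> real" where
  "marcumQ_integrand M a x =
     (if a = 0 then x * (x powr (2 * M - 2) / (2 powr (M - 1) * Gamma M)) * exp (- (x\<^sup>2) / 2)
      else x * (x / a) powr (M - 1) * exp (- (x\<^sup>2 + a\<^sup>2) / 2) * bessel_I (M - 1) (a * x))"

lemma marcumQ_eq_set_integral: "marcumQ M a b = (\<integral>x\<in>{b..}. marcumQ_integrand M a x \<partial>lborel)"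
  by (cases "a = 0") (simp_all add: marcumQ_def marcumQ_integrand_def)

lemma has_bochner_integral_half_gaussian_odd_moment:
  "has_bochner_integral lborel
     (\<lambda>x::real. indicator {0..} x * (x ^ (2 * k + 1) * exp (- (x\<^sup>2) / 2))) (2 ^ k * fact k)"
proof -
  let ?c = "1 / sqrt 2 :: real"
  have "has_bochner_integral lborel
      (\<lambda>x::real. indicator {0..} x *\<^sub>R (exp (- x\<^sup>2) * x ^ (2 * k + 1))) (fact k / 2)"
    by (rule gaussian_moment_odd_pos)
  then have "has_bochner_integral lborel
      (\<lambda>x. (\<lambda>x::real. indicator {0..} x *\<^sub>R (exp (- x\<^sup>2) * x ^ (2 * k + 1))) (0 + ?c * x))
      ((fact k / 2) /\<^sub>R \<bar>?c\<bar>)"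
    by (subst (asm) lborel_has_bochner_integral_real_affine_iff[where c = ?c and t = 0]) auto
  then have scaled: "has_bochner_integral lborel
      (\<lambda>x::real. indicator {0..} x * (exp (- (x\<^sup>2) / 2) * (x ^ (2 * k + 1) / sqrt 2 ^ (2 * k + 1))))
      (fact k / 2 * sqrt 2)"
  proof (rule has_bochner_integral_cong[THEN iffD1, rotated 3])
    fix x :: real
    have "indicator {0..} (?c * x) = (indicator {0..} x :: real)"
      by (auto simp: indicator_def zero_le_divide_iff)
    moreover have "(?c * x)\<^sup>2 = x\<^sup>2 / 2" "(?c * x) ^ (2 * k + 1) = x ^ (2 * k + 1) / sqrt 2 ^ (2 * k + 1)"
      by (simp_all add: power_mult_distrib power_divide)
    ultimately show "(\<lambda>x::real. indicator {0..} x *\<^sub>R (exp (- x\<^sup>2) * x ^ (2 * k + 1))) (0 + ?c * x) =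
        indicator {0..} x * (exp (- (x\<^sup>2) / 2) * (x ^ (2 * k + 1) / sqrt 2 ^ (2 * k + 1)))"
      by simp
  qed auto
  have s0: "sqrt 2 ^ (2 * k) = (2::real) ^ k" by (simp add: power_mult)
  then have s: "sqrt 2 ^ (2 * k + 1) = 2 ^ k * sqrt 2" by (simp only: power_add) simp
  from has_bochner_integral_mult_right[OF scaled, of "sqrt 2 ^ (2 * k + 1)"] show ?thesis
    by (rule has_bochner_integral_cong[THEN iffD1, rotated 3])
       (auto simp: s field_simps s0[unfolded mult.commute[of 2 k]])
qed

lemma chi_density_nonneg: "chi_density n x \<ge> 0"
  by (auto simp: chi_density_def indicator_def)

lemma chi_density_zero: "chi_density n 0 = 0"
  by (simp add: chi_density_def)

lemma borel_measurable_chi_density [measurable]: "chi_density n \<in> borel_measurable borel"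
  unfolding chi_density_def[abs_def] by measurable

lemma nn_integral_chi_density: "(\<integral>\<^sup>+x. ennreal (chi_density n x) \<partial>lborel) = 1"
proof -
  have "has_bochner_integral lborel (chi_density n) 1"
    using has_bochner_integral_divide_zero[OF has_bochner_integral_half_gaussian_odd_moment,
        of n "2 ^ n * fact n"]
    unfolding chi_density_def[abs_def] by simp
  then show ?thesis
    by (subst nn_integral_eq_integral)
       (auto simp: chi_density_nonneg has_bochner_integral_iff)
qed

lemma fact_pow2_ge_1: "1 \<le> (2::real) ^ n * fact n"
  using one_le_power[of "2::real" n] fact_ge_1[of n, where 'a=real]
  by (metis mult_mono' one_le_numeral order_trans zero_le_one mult_1)

lemma chi_density_le_power: "0 \<le> x \<Longrightarrow> x \<le> 1 \<Longrightarrow> chi_density (k + m) x \<le> x ^ (2 * m + 1)"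
proof -
  assume x: "0 \<le> x" "x \<le> 1"
  have "chi_density (k + m) x \<le> x ^ (2 * (k + m) + 1) * exp (- (x\<^sup>2) / 2) / 1"
    using x fact_pow2_ge_1[of "k + m"] unfolding chi_density_def
    by (simp del: div_by_1, intro divide_left_mono) auto
  also have "\<dots> \<le> x ^ (2 * (k + m) + 1)"
    using x by (simp add: mult_left_le)
  also have "\<dots> \<le> x ^ (2 * m + 1)"
    using x by (intro power_decreasing) auto
  finally show ?thesis .
qed

lemma poisson_weight_nonneg: "poisson_weight a k \<ge> 0"
  by (simp add: poisson_weight_def)

lemma sums_poisson_weight: "poisson_weight a sums 1"
proof -
  have "(\<lambda>k. exp (- (a\<^sup>2) / 2) * ((a\<^sup>2 / 2) ^ k /\<^sub>R fact k)) sums (exp (- (a\<^sup>2) / 2) * exp (a\<^sup>2 / 2))"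
    by (intro sums_mult exp_converges)
  moreover have "exp (- (a\<^sup>2) / 2) * exp (a\<^sup>2 / 2) = 1"
    by (simp add: exp_minus_inverse[symmetric] exp_minus)
  moreover have "(\<lambda>k. exp (- (a\<^sup>2) / 2) * ((a\<^sup>2 / 2) ^ k /\<^sub>R fact k)) = poisson_weight a"
    by (rule ext) (simp add: poisson_weight_def field_simps)
  ultimately show ?thesis by simp
qed

lemma summable_poisson_chi: "summable (\<lambda>k. poisson_weight a k * chi_density (k + m) x)"
proof (rule summable_comparison_test)
  show "summable (\<lambda>k. \<bar>x\<bar> ^ (2 * m + 1) * ((a\<^sup>2 * x\<^sup>2 / 2) ^ k /\<^sub>R fact k))"
    using exp_converges[of "a\<^sup>2 * x\<^sup>2 / 2"] by (intro summable_mult) (simp add: sums_iff)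
  show "\<exists>N. \<forall>n\<ge>N. norm (poisson_weight a n * chi_density (n + m) x)
      \<le> \<bar>x\<bar> ^ (2 * m + 1) * ((a\<^sup>2 * x\<^sup>2 / 2) ^ n /\<^sub>R fact n)"
  proof (intro exI allI impI)
    fix n :: nat
    let ?N = "indicator {0..} x * (\<bar>x\<bar> ^ (2 * (n + m) + 1) * exp (- (x\<^sup>2) / 2)) :: real"
    have N: "?N \<le> \<bar>x\<bar> ^ (2 * (n + m) + 1)"
    proof (cases "x \<ge> 0")
      case False
      then have "indicator {0..} x = (0::real)" by (simp add: indicator_def)
      then show ?thesis by (simp only: mult_zero_left zero_le_power_abs)
    qed (simp add: indicator_def mult_left_le)
    have "?N / (2 ^ (n + m) * fact (n + m)) \<le> ?N / 1"
      using fact_pow2_ge_1[of "n + m"] by (intro divide_left_mono) auto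
    then have chi: "?N / (2 ^ (n + m) * fact (n + m)) \<le> \<bar>x\<bar> ^ (2 * (n + m) + 1)"
      using N by simp
    have "norm (poisson_weight a n * chi_density (n + m) x) =
        exp (- (a\<^sup>2) / 2) * (a\<^sup>2 / 2) ^ n / fact n * (?N / (2 ^ (n + m) * fact (n + m)))"
      unfolding poisson_weight_def chi_density_def by (simp add: abs_mult power_abs indicator_def)
    also have "\<dots> \<le> ((a\<^sup>2 / 2) ^ n / fact n) * \<bar>x\<bar> ^ (2 * (n + m) + 1)"
      using chi by (intro mult_mono divide_right_mono mult_left_le_one_le) auto
    also have "\<dots> = \<bar>x\<bar> ^ (2 * m + 1) * ((a\<^sup>2 * x\<^sup>2 / 2) ^ n /\<^sub>R fact n)"
      using abs_mult_self_eq[of "x ^ n"]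
      by (simp add: power_add power_mult power_mult_distrib field_simps power2_eq_square power_abs)
    finally show "norm (poisson_weight a n * chi_density (n + m) x)
        \<le> \<bar>x\<bar> ^ (2 * m + 1) * ((a\<^sup>2 * x\<^sup>2 / 2) ^ n /\<^sub>R fact n)" .
  qed
qed

lemma bessel_term_eq_poisson_chi:
  assumes x: "x > 0" and a: "a > 0"
  shows "x * (x / a) ^ m * exp (- (x\<^sup>2 + a\<^sup>2) / 2) * ((a * x / 2) ^ (2 * k + m) / (fact k * fact (k + m)))
     = poisson_weight a k * chi_density (k + m) x"
proof -
  have e: "exp (- (x\<^sup>2 + a\<^sup>2) / 2) = exp (- (a\<^sup>2) / 2) * exp (- (x\<^sup>2) / 2)"
    by (simp add: exp_add[symmetric] field_simps)
  have p: "(x / a) ^ m * (a * x / 2) ^ (2 * k + m) = x ^ (2 * k + 2 * m) * (a\<^sup>2 / 2) ^ k / 2 ^ (k + m)"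
  proof -
    have "(a * x / 2) ^ (2 * k + m) = a ^ (2 * k) * a ^ m * x ^ (2 * k + m) / 2 ^ (2 * k + m)"
      by (simp add: power_mult_distrib power_divide power_add)
    moreover have "(x / a) ^ m = x ^ m / a ^ m" "(a\<^sup>2 / 2) ^ k = a ^ (2 * k) / 2 ^ k"
      by (simp_all add: power_divide power_mult)
    moreover have "(2::real) ^ (2 * k + m) = 2 ^ k * 2 ^ (k + m)"
      by (simp add: power_add[symmetric] mult_2)
    moreover have "x ^ (2 * k + 2 * m) = x ^ (2 * k + m) * x ^ m"
      by (simp add: power_add[symmetric] algebra_simps)
    ultimately show ?thesis using a by (simp add: field_simps)
  qed
  have "x * (x / a) ^ m * exp (- (x\<^sup>2 + a\<^sup>2) / 2) * ((a * x / 2) ^ (2 * k + m) / (fact k * fact (k + m)))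
      = exp (- (a\<^sup>2) / 2) * exp (- (x\<^sup>2) / 2) * x * ((x / a) ^ m * (a * x / 2) ^ (2 * k + m))
          / (fact k * fact (k + m))"
    unfolding e by (simp add: field_simps)
  also have "\<dots> = poisson_weight a k * chi_density (k + m) x"
    using x unfolding p poisson_weight_def chi_density_def by (simp add: field_simps power_add)
  finally show ?thesis .
qed

lemma sums_marcumQ_integrand:
  assumes x: "x > 0" and a: "a \<ge> 0"
  shows "(\<lambda>k. poisson_weight a k * chi_density (k + m) x) sums marcumQ_integrand (real (Suc m)) a x"
proof (cases "a = 0")
  case True
  have "x powr (2 * real (Suc m) - 2) = x ^ (2 * m)"
    using powr_realpow[OF x, of "2 * m"] by (simp add: algebra_simps)
  moreover have "(2::real) powr (real (Suc m) - 1) = 2 ^ m"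
    using powr_realpow[of 2 m] by simp
  moreover have "Gamma (real (Suc m)) = fact m"
    using Gamma_fact[of m] by (simp add: add.commute)
  ultimately have "marcumQ_integrand (real (Suc m)) a x = chi_density (0 + m) x"
    using True x by (simp add: marcumQ_integrand_def chi_density_def indicator_def field_simps)
  moreover have "(\<lambda>k. poisson_weight a k * chi_density (k + m) x) = (\<lambda>k. if k = 0 then chi_density m x else 0)"
    using True by (auto simp: poisson_weight_def)
  ultimately show ?thesis
    using sums_single[of 0 "\<lambda>_. chi_density m x"] by simp
next
  case False
  with a have a: "a > 0" by simp
  define c where "c = x * (x / a) ^ m * exp (- (x\<^sup>2 + a\<^sup>2) / 2)"
  define u where "u k = (a * x / 2) ^ (2 * k + m) / (fact k * fact (k + m))" for k
  have c: "c > 0" using x a by (simp add: c_def)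
  have term_eq: "poisson_weight a k * chi_density (k + m) x = c * u k" for k
    using bessel_term_eq_poisson_chi[OF x a, of m k] by (simp add: c_def u_def)
  have su: "summable u"
    using summable_poisson_chi[of a m x] c unfolding term_eq by simp
  have "bessel_I (real (Suc m) - 1) (a * x) = suminf u"
    unfolding bessel_I_def
  proof (rule arg_cong[where f=suminf], rule ext)
    fix k
    have "(a * x / 2) powr (2 * real k + (real (Suc m) - 1)) = (a * x / 2) ^ (2 * k + m)"
      using powr_realpow[of "a * x / 2" "2 * k + m"] a x by simp
    moreover have "Gamma (real k + (real (Suc m) - 1) + 1) = fact (k + m)"
      using Gamma_fact[of "k + m"] by (simp add: add.commute add.left_commute)
    ultimately show "(a * x / 2) powr (2 * real k + (real (Suc m) - 1)) /
        (fact k * Gamma (real k + (real (Suc m) - 1) + 1)) = u k"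
      by (simp add: u_def)
  qed
  then have "marcumQ_integrand (real (Suc m)) a x = c * suminf u"
    using a x powr_realpow[of "x / a" m] by (simp add: marcumQ_integrand_def c_def)
  then show ?thesis
    unfolding term_eq using sums_mult[OF summable_sums[OF su], of c] by simp
qed

lemma marcum_density_nonneg: "marcum_density m a x \<ge> 0"
  unfolding marcum_density_def
  by (intro suminf_nonneg summable_poisson_chi mult_nonneg_nonneg poisson_weight_nonneg chi_density_nonneg)

lemma borel_measurable_marcum_density [measurable]: "marcum_density m a \<in> borel_measurable borel"
  unfolding marcum_density_def[abs_def] by measurable

lemma marcum_density_le_power:
  assumes "0 \<le> x" "x \<le> 1"
  shows "marcum_density m a x \<le> x ^ (2 * m + 1)"
proof -
  have "marcum_density m a x \<le> (\<Sum>k. poisson_weight a k * x ^ (2 * m + 1))"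
    unfolding marcum_density_def
    by (intro suminf_le mult_left_mono chi_density_le_power assms poisson_weight_nonneg
        summable_poisson_chi summable_mult2)
       (use sums_poisson_weight in \<open>simp add: sums_iff\<close>)
  also have "\<dots> = x ^ (2 * m + 1)"
    using sums_mult2[OF sums_poisson_weight[of a], of "x ^ (2 * m + 1)"] by (simp add: sums_iff)
  finally show ?thesis .
qed

lemma marcum_density_ge_first_term: "poisson_weight a 0 * chi_density m x \<le> marcum_density m a x"
  using sum_le_suminf[OF summable_poisson_chi[of a m x], of "{0}"] poisson_weight_nonneg chi_density_nonneg
  unfolding marcum_density_def by simp

lemma nn_integral_marcum_density: "(\<integral>\<^sup>+x. ennreal (marcum_density m a x) \<partial>lborel) = 1"
proof -
  have "ennreal (marcum_density m a x)
      = (\<Sum>k. ennreal (poisson_weight a k) * ennreal (chi_density (k + m) x))" for x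
  proof -
    have "(\<Sum>k. ennreal (poisson_weight a k) * ennreal (chi_density (k + m) x))
        = (\<Sum>k. ennreal (poisson_weight a k * chi_density (k + m) x))"
      by (simp add: ennreal_mult' poisson_weight_nonneg chi_density_nonneg)
    also have "\<dots> = ennreal (marcum_density m a x)"
      unfolding marcum_density_def
      by (intro suminf_ennreal2 summable_poisson_chi mult_nonneg_nonneg poisson_weight_nonneg
          chi_density_nonneg)
    finally show ?thesis ..
  qed
  then have "(\<integral>\<^sup>+x. ennreal (marcum_density m a x) \<partial>lborel)
      = (\<Sum>k. (\<integral>\<^sup>+x. ennreal (poisson_weight a k) * ennreal (chi_density (k + m) x) \<partial>lborel))"
    by (simp only:) (rule nn_integral_suminf, measurable)
  also have "\<dots> = (\<Sum>k. ennreal (poisson_weight a k))"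
    by (subst nn_integral_cmult) (simp_all add: nn_integral_chi_density)
  also have "\<dots> = 1"
    using suminf_ennreal_eq[OF poisson_weight_nonneg sums_poisson_weight] by simp
  finally show ?thesis .
qed

lemma marcumQ_eq_nn_integral:
  assumes b: "b \<ge> 0" and a: "a \<ge> 0"
  shows "marcumQ (real (Suc m)) a b
       = enn2real (\<integral>\<^sup>+x. ennreal (indicator {b..} x * marcum_density m a x) \<partial>lborel)"
proof -
  have "(\<lambda>x. indicator {b..} x *\<^sub>R marcumQ_integrand (real (Suc m)) a x)
      = (\<lambda>x. indicator {b..} x * marcum_density m a x)"
  proof
    fix x :: real
    consider "x < b" | "x = 0" | "x \<ge> b" "x > 0" using b by fastforce
    then show "indicator {b..} x *\<^sub>R marcumQ_integrand (real (Suc m)) a x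
        = indicator {b..} x * marcum_density m a x"
    proof cases
      case 2
      then show ?thesis by (simp add: marcumQ_integrand_def marcum_density_def chi_density_zero)
    next
      case 3
      then show ?thesis
        using sums_marcumQ_integrand[of x a m] a by (simp add: marcum_density_def sums_iff)
    qed (simp add: indicator_def)
  qed
  then have "marcumQ (real (Suc m)) a b = (\<integral>x. indicator {b..} x * marcum_density m a x \<partial>lborel)"
    by (simp only: marcumQ_eq_set_integral set_lebesgue_integral_def)
  also have "\<dots> = enn2real (\<integral>\<^sup>+x. ennreal (indicator {b..} x * marcum_density m a x) \<partial>lborel)"
    by (rule integral_eq_nn_integral) (auto simp: marcum_density_nonneg)
  finally show ?thesis .
qed

lemma marcum_density_eq_0: "x \<le> 0 \<Longrightarrow> marcum_density m a x = 0"
  by (cases "x = 0") (simp_all add: marcum_density_def chi_density_def)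

section \<open>The noncentral chi-squared CDF near the origin\<close>

lemma ncx2_cdf_eq_nn_integral:
  assumes D: "ncx2_dist (2 * real (Suc m)) lam D" and t: "0 \<le> t"
  shows "measure D {..t}
       = enn2real (\<integral>\<^sup>+x. ennreal (indicator {..<sqrt t} x * marcum_density m (sqrt lam) x) \<partial>lborel)"
proof -
  let ?Q = "marcum_density m (sqrt lam)"
  let ?below = "\<integral>\<^sup>+x. ennreal (indicator {..<sqrt t} x * ?Q x) \<partial>lborel"
  let ?above = "\<integral>\<^sup>+x. ennreal (indicator {sqrt t..} x * ?Q x) \<partial>lborel"
  have "?below + ?above
      = (\<integral>\<^sup>+x. ennreal (indicator {..<sqrt t} x * ?Q x) + ennreal (indicator {sqrt t..} x * ?Q x) \<partial>lborel)"
    by (rule nn_integral_add[symmetric]) auto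
  also have "\<dots> = (\<integral>\<^sup>+x. ennreal (?Q x) \<partial>lborel)"
    by (intro nn_integral_cong) (auto simp: indicator_def)
  finally have "?below + ?above = (\<integral>\<^sup>+x. ennreal (?Q x) \<partial>lborel)" .
  then have sum: "?below + ?above = 1" by (simp add: nn_integral_marcum_density)
  have "?below \<le> 1" "?above \<le> 1"
    unfolding sum[symmetric] by (auto intro: add_increasing add_increasing2)
  then have fin: "?below < top" "?above < top"
    by (auto simp: le_less_trans)
  have "ennreal (enn2real ?below + enn2real ?above) = 1"
    using fin sum by (simp add: ennreal_plus)
  then have "enn2real ?below + enn2real ?above = 1"
    by (simp only: ennreal_eq_1)
  moreover have "measure D {..t} = 1 - marcumQ (real (Suc m)) (sqrt lam) (sqrt t)"
  proof -
    have "2 * real (Suc m) / 2 = real (Suc m)" by simp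
    then have "\<forall>g. measure D {..g} = (if g < 0 then 0 else 1 - marcumQ (real (Suc m)) (sqrt lam) (sqrt g))"
      using D unfolding ncx2_dist_def by metis
    then show ?thesis using t by simp
  qed
  moreover have "marcumQ (real (Suc m)) (sqrt lam) (sqrt t) = enn2real ?above"
    using D t by (intro marcumQ_eq_nn_integral) (auto simp: ncx2_dist_def)
  ultimately show ?thesis by simp
qed

lemma nn_integral_marcum_density_below_le:
  assumes "r \<le> 1"
  shows "(\<integral>\<^sup>+x. ennreal (indicator {..<r} x * marcum_density m a x) \<partial>lborel) \<le> ennreal (r ^ (2 * m + 2))"
proof (cases "r \<ge> 0")
  case False
  then have zero: "indicator {..<r} x * marcum_density m a x = 0" for x
    by (simp add: marcum_density_eq_0 indicator_def)
  show ?thesis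
    by (simp only: zero ennreal_0) simp
next
  case r: True
  have "(\<integral>\<^sup>+x. ennreal (indicator {..<r} x * marcum_density m a x) \<partial>lborel)
      \<le> (\<integral>\<^sup>+x. ennreal (r ^ (2 * m + 1)) * indicator {0..<r} x \<partial>lborel)"
  proof (rule nn_integral_mono)
    fix x
    consider "x \<le> 0" | "x \<in> {0<..<r}" | "x \<ge> r" by fastforce
    then show "ennreal (indicator {..<r} x * marcum_density m a x) \<le> ennreal (r ^ (2 * m + 1)) * indicator {0..<r} x"
    proof cases
      case 2
      then have "marcum_density m a x \<le> r ^ (2 * m + 1)"
        using marcum_density_le_power[of x m a] power_mono[of x r "2 * m + 1"] assms by auto
      then show ?thesis using 2 by (simp add: ennreal_leI)
    qed (simp_all add: marcum_density_eq_0)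
  qed
  also have "\<dots> = ennreal (r ^ (2 * m + 2))"
    using r by (simp add: nn_integral_cmult_indicator ennreal_mult'[symmetric])
  finally show ?thesis .
qed

lemma ncx2_cdf_le_power:
  assumes D: "ncx2_dist (2 * real (Suc m)) lam D" and t: "0 \<le> t" "t \<le> 1"
  shows "measure D {..t} \<le> t ^ Suc m"
proof -
  have "measure D {..t} \<le> enn2real (ennreal (sqrt t ^ (2 * m + 2)))"
    unfolding ncx2_cdf_eq_nn_integral[OF D t(1)]
    using t by (intro enn2real_mono nn_integral_marcum_density_below_le) auto
  also have "sqrt t ^ (2 * m + 2) = (sqrt t ^ 2) ^ Suc m"
    unfolding power_mult[symmetric] by simp
  finally show ?thesis using t by simp
qed

lemma ncx2_2_cdf_ge_linear:
  assumes D: "ncx2_dist 2 lam D" and t: "0 \<le> t" "t \<le> 1"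
  shows "exp (- lam / 2) * exp (- 1 / 2) / 4 * t \<le> measure D {..t}"
proof -
  define r where "r = sqrt t"
  define c where "c = exp (- lam / 2) * exp (- 1 / 2) * (r / 2)"
  have r: "0 \<le> r" "r \<le> 1" "r\<^sup>2 = t" using t by (auto simp: r_def)
  have lam: "lam \<ge> 0" using D by (simp add: ncx2_dist_def)
  text \<open>The first mixture component alone has density at least \<open>c\<close> on \<open>[r/2, r)\<close>.\<close>
  have "exp (- lam / 2) * exp (- 1 / 2) / 4 * t = c * (r - r / 2)"
    unfolding c_def r(3)[symmetric] by (simp add: power2_eq_square)
  then have "ennreal (exp (- lam / 2) * exp (- 1 / 2) / 4 * t) = ennreal c * ennreal (r - r / 2)"
    by (simp only:) (rule ennreal_mult, use r in \<open>auto simp: c_def\<close>)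
  also have "\<dots> = (\<integral>\<^sup>+x. ennreal c * indicator {r/2..<r} x \<partial>lborel)"
    using r by (simp add: nn_integral_cmult_indicator)
  also have "\<dots> \<le> (\<integral>\<^sup>+x. ennreal (indicator {..<r} x * marcum_density 0 (sqrt lam) x) \<partial>lborel)"
  proof (rule nn_integral_mono)
    fix x
    show "ennreal c * indicator {r/2..<r} x \<le> ennreal (indicator {..<r} x * marcum_density 0 (sqrt lam) x)"
    proof (cases "x \<in> {r/2..<r}")
      case True
      then have x: "0 \<le> x" "x \<le> 1" "r / 2 \<le> x" using r by auto
      have "exp (- 1 / 2) \<le> exp (- (x\<^sup>2) / 2)"
        using x by (simp add: power_le_one)
      then have "(r / 2) * exp (- 1 / 2) \<le> x * exp (- (x\<^sup>2) / 2)"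
        using x by (intro mult_mono) auto
      then have "c \<le> poisson_weight (sqrt lam) 0 * chi_density 0 x"
        using x lam by (simp add: c_def poisson_weight_def chi_density_def mult_ac)
      also have "\<dots> \<le> marcum_density 0 (sqrt lam) x"
        by (rule marcum_density_ge_first_term)
      finally show ?thesis using True by (simp add: ennreal_leI)
    qed simp
  qed
  finally have lower: "ennreal (exp (- lam / 2) * exp (- 1 / 2) / 4 * t)
      \<le> (\<integral>\<^sup>+x. ennreal (indicator {..<r} x * marcum_density 0 (sqrt lam) x) \<partial>lborel)" .
  have "(\<integral>\<^sup>+x. ennreal (indicator {..<r} x * marcum_density 0 (sqrt lam) x) \<partial>lborel) < top"
    using nn_integral_marcum_density_below_le[of r 0 "sqrt lam"] r by (simp add: le_less_trans)
  from enn2real_mono[OF lower this] have "exp (- lam / 2) * exp (- 1 / 2) / 4 * t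
      \<le> enn2real (\<integral>\<^sup>+x. ennreal (indicator {..<r} x * marcum_density 0 (sqrt lam) x) \<partial>lborel)"
    using t by simp
  also have "\<dots> = measure D {..t}"
    using ncx2_cdf_eq_nn_integral[of 0 lam D t] D t by (simp add: r_def)
  finally show ?thesis .
qed

section \<open>Inverse moments and the behaviour of the CDF at the origin\<close>

lemma dyadic_bracket:
  fixes y :: real
  assumes "0 < y" "y \<le> 1"
  obtains k where "y \<le> (1/2) ^ k" "1 / y \<le> 2 ^ (k + 1)"
proof -
  obtain n where n: "(1/2::real) ^ n < y" using real_arch_pow_inv[of y "1/2"] assms by auto
  define n0 where "n0 = (LEAST n. (1/2::real) ^ n < y)"
  have n0: "(1/2::real) ^ n0 < y" unfolding n0_def by (rule LeastI[of _ n]) (rule n)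
  with assms obtain k where k: "n0 = Suc k" by (cases n0) auto
  then have "y \<le> (1/2) ^ k"
    using not_less_Least[of k "\<lambda>n. (1/2::real) ^ n < y"] unfolding n0_def by (simp add: not_less)
  moreover have "1 / y \<le> 1 / (1/2) ^ (k + 1)"
    using n0 k assms by (intro divide_left_mono) auto
  then have "1 / y \<le> 2 ^ (k + 1)" by (simp add: power_divide)
  ultimately show ?thesis by (rule that)
qed

lemma ennreal_le_suminf: "(f k :: ennreal) \<le> suminf f"
  using sum_le_suminf[OF summableI, of "{k}" f] by simp

lemma ennreal_inverse_le_dyadic_suminf:
  fixes y :: real
  shows "ennreal (1 / y) \<le> 1 + (\<Sum>n. ennreal (2 ^ (n + 1)) * indicator {..(1/2) ^ n} y)"
proof (cases "0 < y \<and> y \<le> 1")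
  case True
  then obtain k where k: "y \<le> (1/2) ^ k" "1 / y \<le> 2 ^ (k + 1)" by (blast elim: dyadic_bracket)
  let ?f = "\<lambda>n. ennreal (2 ^ (n + 1)) * indicator {..(1/2) ^ n} y"
  have "ennreal (1 / y) \<le> ?f k"
    using k by (simp add: ennreal_leI)
  also have "\<dots> \<le> suminf ?f"
    by (rule ennreal_le_suminf)
  also have "\<dots> \<le> 1 + suminf ?f"
    by simp
  finally show ?thesis .
next
  case False
  have "1 / y \<le> 1"
  proof (cases "y \<le> 0")
    case True
    then have "1 / y \<le> 0" by (simp add: divide_nonneg_nonpos)
    then show ?thesis by linarith
  qed (use False in simp)
  then have "ennreal (1 / y) \<le> 1"
    by (simp add: ennreal_leI)
  then show ?thesis
    by (rule order_trans) simp
qed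

lemma dyadic_sum_le_inverse:
  fixes y :: real
  assumes y: "0 < y"
  shows "(\<Sum>m<N. 2 ^ m * indicator {..(1/2) ^ m} y) \<le> 2 / y"
proof (cases "\<exists>m<N. y \<le> (1/2) ^ m")
  case True
  define n where "n = Max {m. m < N \<and> y \<le> (1/2) ^ m}"
  have fin: "finite {m. m < N \<and> y \<le> (1/2) ^ m}" by simp
  have n: "n < N" "y \<le> (1/2) ^ n"
    using Max_in[OF fin] True unfolding n_def by auto
  have le_n: "m \<le> n" if "m < N" "y \<le> (1/2) ^ m" for m
    using Max_ge[OF fin] that unfolding n_def by auto
  text \<open>Since \<open>(1/2)^m\<close> decreases, the terms that survive are exactly those with \<open>m \<le> n\<close>.\<close>
  have "(\<Sum>m<N. 2 ^ m * indicator {..(1/2) ^ m} y) \<le> (\<Sum>m<Suc n. (2::real) ^ m)"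
  proof -
    have "(\<Sum>m<N. 2 ^ m * indicator {..(1/2) ^ m} y) = (\<Sum>m\<in>{m. m < N \<and> y \<le> (1/2) ^ m}. (2::real) ^ m)"
      by (rule sum.mono_neutral_cong_right) (auto simp: indicator_def)
    also have "\<dots> \<le> (\<Sum>m<Suc n. (2::real) ^ m)"
      using le_n by (intro sum_mono2) (auto intro!: le_imp_less_Suc)
    finally show ?thesis .
  qed
  also have "\<dots> = 2 ^ Suc n - 1"
    by (simp add: sum_gp_strict)
  also have "\<dots> \<le> 2 / y"
    using n(2) y by (simp add: field_simps power_divide)
  finally show ?thesis .
next
  case False
  then have "(\<Sum>m<N. 2 ^ m * indicator {..(1/2) ^ m} y) = (0::real)"
    by (intro sum.neutral) (auto simp: indicator_def)
  then show ?thesis using y by simp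
qed

text \<open>Split the range of \<open>X\<close> dyadically.\<close>
lemma nn_integral_inverse_less_top:
  assumes M: "prob_space M" and X[measurable]: "X \<in> borel_measurable M" and C: "C \<ge> 0"
    and cdf: "\<And>t. 0 \<le> t \<Longrightarrow> t \<le> 1 \<Longrightarrow> emeasure M {x\<in>space M. X x \<le> t} \<le> ennreal (C * t\<^sup>2)"
  shows "(\<integral>\<^sup>+x. ennreal (1 / X x) \<partial>M) < \<infinity>"
proof -
  interpret prob_space M by (rule M)
  let ?A = "\<lambda>n. {x\<in>space M. X x \<le> (1/2) ^ n}"
  have "(\<integral>\<^sup>+x. ennreal (1 / X x) \<partial>M)
      \<le> (\<integral>\<^sup>+x. 1 + (\<Sum>n. ennreal (2 ^ (n + 1)) * indicator (?A n) x) \<partial>M)"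
  proof (rule nn_integral_mono)
    fix x assume "x \<in> space M"
    then have "indicator (?A n) x = (indicator {..(1/2) ^ n} (X x) :: ennreal)" for n
      by (simp add: indicator_def)
    then show "ennreal (1 / X x) \<le> 1 + (\<Sum>n. ennreal (2 ^ (n + 1)) * indicator (?A n) x)"
      by (simp only: ennreal_inverse_le_dyadic_suminf)
  qed
  also have "\<dots> = 1 + (\<Sum>n. ennreal (2 ^ (n + 1)) * emeasure M (?A n))"
    by (subst nn_integral_add)
       (auto simp: nn_integral_suminf nn_integral_cmult_indicator emeasure_space_1)
  also have "\<dots> \<le> 1 + (\<Sum>n. ennreal (2 * C * (1/2) ^ n))"
  proof (intro add_left_mono suminf_le)
    fix n
    have real_eq: "(2::real) ^ (n + 1) * (C * ((1/2) ^ n)\<^sup>2) = 2 * C * (1/2) ^ n"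
      by (simp add: power2_eq_square power_divide)
    have ennreal_eq: "ennreal (2 ^ (n + 1)) * ennreal (C * ((1/2) ^ n)\<^sup>2)
        = ennreal (2 ^ (n + 1) * (C * ((1/2) ^ n)\<^sup>2))"
      using C by (intro ennreal_mult[symmetric]) auto
    have "emeasure M (?A n) \<le> ennreal (C * ((1/2) ^ n)\<^sup>2)"
      by (rule cdf) (auto simp: power_le_one)
    then have "ennreal (2 ^ (n + 1)) * emeasure M (?A n) \<le> ennreal (2 ^ (n + 1)) * ennreal (C * ((1/2) ^ n)\<^sup>2)"
      by (rule mult_left_mono) simp
    then show "ennreal (2 ^ (n + 1)) * emeasure M (?A n) \<le> ennreal (2 * C * (1/2) ^ n)"
      unfolding ennreal_eq real_eq .
  qed auto
  also have "\<dots> < \<infinity>"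
  proof -
    have "summable (\<lambda>n. 2 * C * (1/2::real) ^ n)" by (intro summable_mult summable_geometric) simp
    then have "(\<Sum>n. ennreal (2 * C * (1/2) ^ n)) \<noteq> top"
      using C by (intro ennreal_suminf_neq_top) auto
    then show ?thesis by (simp add: less_top)
  qed
  finally show ?thesis .
qed

text \<open>The first \<open>N\<close> dyadic scales each contribute at least \<open>c/2\<close> to \<open>E[1/X]\<close>.\<close>
lemma nn_integral_inverse_eq_top:
  assumes M: "prob_space M" and X[measurable]: "X \<in> borel_measurable M"
    and pos: "AE x in M. X x > 0" and c: "c > 0"
    and cdf: "\<And>t. 0 \<le> t \<Longrightarrow> t \<le> 1 \<Longrightarrow> ennreal (c * t) \<le> emeasure M {x\<in>space M. X x \<le> t}"
  shows "(\<integral>\<^sup>+x. ennreal (1 / X x) \<partial>M) = \<infinity>"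
proof (rule ccontr)
  interpret prob_space M by (rule M)
  let ?I = "\<integral>\<^sup>+x. ennreal (1 / X x) \<partial>M"
  let ?A = "\<lambda>n. {x\<in>space M. X x \<le> (1/2) ^ n}"
  have bound: "ennreal (real N * c) \<le> 2 * ?I" for N
  proof -
    have "(\<Sum>m<N. ennreal (2 ^ m) * ennreal (c * (1/2) ^ m)) = (\<Sum>m<N. ennreal c)"
      using c by (intro sum.cong) (auto simp: ennreal_mult'[symmetric] power_divide)
    then have "ennreal (real N * c) = (\<Sum>m<N. ennreal (2 ^ m) * ennreal (c * (1/2) ^ m))"
      using c by (simp add: ennreal_of_nat_eq_real_of_nat ennreal_mult' mult.commute)
    also have "\<dots> \<le> (\<Sum>m<N. ennreal (2 ^ m) * emeasure M (?A m))"
      by (intro sum_mono mult_left_mono cdf) (auto simp: power_le_one)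
    also have "\<dots> = (\<integral>\<^sup>+x. (\<Sum>m<N. ennreal (2 ^ m) * indicator (?A m) x) \<partial>M)"
      by (subst nn_integral_sum) (auto simp: nn_integral_cmult_indicator)
    also have "\<dots> \<le> (\<integral>\<^sup>+x. 2 * ennreal (1 / X x) \<partial>M)"
    proof (rule nn_integral_mono_AE)
      show "AE x in M. (\<Sum>m<N. ennreal (2 ^ m) * indicator (?A m) x) \<le> 2 * ennreal (1 / X x)"
        using pos
      proof eventually_elim
        case (elim x)
        show ?case
        proof (cases "x \<in> space M")
          case True
          have "(\<Sum>m<N. ennreal (2 ^ m) * indicator (?A m) x)
              = (\<Sum>m<N. ennreal (2 ^ m * indicator {..(1/2) ^ m} (X x)))"
            using True by (intro sum.cong) (auto simp: indicator_def)
          also have "\<dots> = ennreal (\<Sum>m<N. 2 ^ m * indicator {..(1/2) ^ m} (X x))"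
            by (rule sum_ennreal) simp
          also have "\<dots> \<le> ennreal (2 * (1 / X x))"
            using dyadic_sum_le_inverse[OF elim, of N] by (intro ennreal_leI) simp
          also have "\<dots> = ennreal 2 * ennreal (1 / X x)"
            by (rule ennreal_mult') simp
          finally show ?thesis by simp
        qed (simp add: indicator_def)
      qed
    qed
    also have "\<dots> = 2 * ?I" by (subst nn_integral_cmult) auto
    finally show ?thesis .
  qed
  assume "?I \<noteq> \<infinity>"
  then have "?I < top" by (simp add: less_top)
  then obtain r0 where r0: "?I = ennreal r0" "r0 \<ge> 0"
    by (cases ?I) auto
  define r where "r = 2 * r0"
  have r: "2 * ?I = ennreal r" "r \<ge> 0"
    using r0 unfolding r_def by (auto simp: ennreal_mult')
  obtain N :: nat where N: "r / c < real N" using reals_Archimedean2 by blast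
  have "real N * c \<le> r" using bound[of N] r c by (simp add: ennreal_le_iff)
  then show False using N c by (simp add: field_simps)
qed

section \<open>Policies that invert the channel\<close>

lemma remaining_Suc_zero_power:
  "P k = 0 \<Longrightarrow> remaining B P g (Suc k) = remaining B P g k"
  by (simp add: Let_def split: prod.split)

lemma remaining_eq_if_zero_powers:
  assumes "\<And>k. j \<le> k \<Longrightarrow> k < K \<Longrightarrow> P k = 0" "j \<le> K"
  shows "remaining B P g K = remaining B P g j"
  using assms(2,1)
proof (induction K rule: dec_induct)
  case (step K)
  then show ?case using remaining_Suc_zero_power[of P K B g] by simp
qed simp

text \<open>With \<open>p B x * x = e\<^sup>B - 1\<close>, a single slot of SNR \<open>x\<close> delivers the whole message.\<close>
definition inversion_power :: "real \<Rightarrow> real \<Rightarrow> real" where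
  "inversion_power B x = (if x > 0 then (exp B - 1) / x else 0)"

lemma inversion_power_nonneg: "B \<ge> 0 \<Longrightarrow> inversion_power B x \<ge> 0"
  by (simp add: inversion_power_def)

lemma borel_measurable_inversion_power [measurable]: "inversion_power B \<in> borel_measurable borel"
  unfolding inversion_power_def[abs_def] by measurable

lemma ln_inversion_power: "x > 0 \<Longrightarrow> ln (1 + inversion_power B x * x) = B"
  by (simp add: inversion_power_def)

lemma ennreal_inversion_power:
  assumes "B \<ge> 0"
  shows "ennreal (inversion_power B x) = ennreal (exp B - 1) * ennreal (1 / x)"
proof (cases "x > 0")
  case False
  then have "1 / x \<le> 0" by (simp add: divide_nonneg_nonpos)
  with False show ?thesis by (simp add: inversion_power_def ennreal_eq_0_iff[THEN iffD2])
qed (use assms in \<open>simp add: inversion_power_def ennreal_mult'[symmetric] divide_inverse\<close>)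

lemma nn_integral_inversion_power_less_top:
  assumes "B \<ge> 0" and [measurable]: "X \<in> borel_measurable M" and "(\<integral>\<^sup>+y. ennreal (1 / X y) \<partial>M) < \<infinity>"
  shows "(\<integral>\<^sup>+y. ennreal (inversion_power B (X y)) \<partial>M) < \<infinity>"
proof -
  have "(\<integral>\<^sup>+y. ennreal (inversion_power B (X y)) \<partial>M) = ennreal (exp B - 1) * (\<integral>\<^sup>+y. ennreal (1 / X y) \<partial>M)"
    using assms(1) by (simp add: ennreal_inversion_power) (rule nn_integral_cmult, measurable)
  then show ?thesis using assms(3) by (simp add: ennreal_mult_less_top)
qed

text \<open>The source's better link in Phase 1, and the destination's better incoming link \<open>\<gamma>~\<close>
  in Phase 2.\<close>
definition source_gain :: "snr \<Rightarrow> real" where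
  "source_gain y = max (fst y) (fst (snd y))"

definition phase2_gain :: "snr \<Rightarrow> real" where
  "phase2_gain y = max (fst (snd y)) (snd (snd y))"

text \<open>Inverting \<open>source_gain\<close> in slot 0 finishes either Phase 1 or the whole message; in the former
  case inverting \<open>phase2_gain\<close> in slot 1 finishes it.\<close>
lemma remaining_two_slot_relay:
  assumes B: "B > 0" and g0: "g 0 = (a0, b0, c0)" "a0 \<ge> 0" "b0 \<ge> 0" "max a0 b0 > 0"
    and g1: "g (Suc 0) = (a1, b1, c1)" "b1 \<ge> 0" "max b1 c1 > 0"
    and P0: "P 0 = inversion_power B (max a0 b0)" and P1: "P (Suc 0) = inversion_power B (max b1 c1)"
  shows "snd (remaining B P g (Suc (Suc 0))) \<le> 0"
proof -
  have p0: "P 0 \<ge> 0" and p1: "P (Suc 0) \<ge> 0"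
    using B by (simp_all add: P0 P1 inversion_power_nonneg)
  have L0: "ln (1 + P 0 * max a0 b0) = B" and L1: "ln (1 + P (Suc 0) * max b1 c1) = B"
    using g0 g1 by (simp_all add: P0 P1 ln_inversion_power)
  have "ln (1 + P 0 * b0) \<ge> 0" "ln (1 + P (Suc 0) * b1) \<ge> 0"
    using p0 p1 g0 g1 by simp_all
  then show ?thesis
    using L0 L1 g0 g1 B by (cases "a0 \<ge> b0") (simp_all add: Let_def max_def)
qed

definition memoryless_policy :: "(nat \<Rightarrow> snr \<Rightarrow> real) \<Rightarrow> nat \<Rightarrow> (nat \<Rightarrow> snr) \<Rightarrow> real" where
  "memoryless_policy \<phi> k g = \<phi> k (g k)"

lemma nn_integral_component_PiM:
  assumes "\<And>i. i \<in> I \<Longrightarrow> prob_space (M i)" "i \<in> I" "f \<in> borel_measurable (M i)"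
  shows "(\<integral>\<^sup>+g. f (g i) \<partial>PiM I M) = (\<integral>\<^sup>+y. f y \<partial>M i)"
proof -
  have "(\<integral>\<^sup>+y. f y \<partial>M i) = (\<integral>\<^sup>+y. f y \<partial>distr (PiM I M) (M i) (\<lambda>g. g i))"
    using assms by (simp add: distr_PiM_component)
  also have "\<dots> = (\<integral>\<^sup>+g. f (g i) \<partial>PiM I M)"
    using assms by (intro nn_integral_distr) (auto simp: distr_PiM_component)
  finally show ?thesis ..
qed

lemma Jstar_le_memoryless_cost:
  assumes S: "prob_space S" and K: "K \<ge> 1"
    and \<phi>_nonneg: "\<And>k y. k < K \<Longrightarrow> \<phi> k y \<ge> 0"
    and \<phi>_meas: "\<And>k. k < K \<Longrightarrow> \<phi> k \<in> borel_measurable S"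
    and decodes: "AE g in PiM {1..<K} (\<lambda>_. S).
        snd (remaining B (\<lambda>k. \<phi> k ((g(0 := g1)) k)) (g(0 := g1)) K) \<le> 0"
  shows "Jstar K B S g1 \<le> ennreal (\<phi> 0 g1) + (\<Sum>k\<in>{1..<K}. \<integral>\<^sup>+y. ennreal (\<phi> k y) \<partial>S)"
proof -
  let ?P = "PiM {1..<K} (\<lambda>_. S)"
  interpret P: prob_space ?P using S by (intro prob_space_PiM) auto
  have comp: "(\<lambda>g. f (g k)) \<in> borel_measurable (PiM I (\<lambda>_. S))"
    if "k \<in> I" "f \<in> borel_measurable S" for f k and I :: "nat set"
    using that by (intro measurable_compose[OF measurable_component_singleton]) auto
  have meas: "(\<lambda>g. ennreal (\<phi> k (g k))) \<in> borel_measurable ?P" if k: "k \<in> {1..<K}" for k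
  proof -
    have "(\<lambda>g. \<phi> k (g k)) \<in> borel_measurable ?P" using k by (intro comp \<phi>_meas) auto
    then show ?thesis by measurable
  qed
  have "admissible K B S g1 (memoryless_policy \<phi>)"
    unfolding admissible_def causal_policy_def memoryless_policy_def
    using \<phi>_nonneg decodes by (auto intro!: comp \<phi>_meas)
  then have "Jstar K B S g1 \<le> (\<integral>\<^sup>+g. ennreal (\<Sum>k<K. \<phi> k ((g(0 := g1)) k)) \<partial>?P)"
    unfolding Jstar_def memoryless_policy_def by (intro INF_lower) simp
  also have "\<dots> = (\<integral>\<^sup>+g. ennreal (\<phi> 0 g1) + (\<Sum>k\<in>{1..<K}. ennreal (\<phi> k (g k))) \<partial>?P)"
  proof (rule nn_integral_cong)
    fix g :: "nat \<Rightarrow> snr"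
    have "{..<K} = insert 0 {1..<K}" using K by auto
    then have "(\<Sum>k<K. \<phi> k ((g(0 := g1)) k)) = \<phi> 0 g1 + (\<Sum>k\<in>{1..<K}. \<phi> k (g k))"
      by simp
    moreover have "ennreal (\<Sum>k\<in>{1..<K}. \<phi> k (g k)) = (\<Sum>k\<in>{1..<K}. ennreal (\<phi> k (g k)))"
      using \<phi>_nonneg by (intro sum_ennreal[symmetric]) auto
    moreover have "0 \<le> (\<Sum>k\<in>{1..<K}. \<phi> k (g k))" "0 \<le> \<phi> 0 g1"
      using K by (auto intro!: sum_nonneg \<phi>_nonneg)
    ultimately show "ennreal (\<Sum>k<K. \<phi> k ((g(0 := g1)) k))
        = ennreal (\<phi> 0 g1) + (\<Sum>k\<in>{1..<K}. ennreal (\<phi> k (g k)))"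
      by (simp add: ennreal_plus)
  qed
  also have "\<dots> = (\<integral>\<^sup>+g. ennreal (\<phi> 0 g1) \<partial>?P) + (\<integral>\<^sup>+g. (\<Sum>k\<in>{1..<K}. ennreal (\<phi> k (g k))) \<partial>?P)"
    by (rule nn_integral_add) (auto intro!: borel_measurable_sum meas[simplified])
  also have "\<dots> = ennreal (\<phi> 0 g1) + (\<Sum>k\<in>{1..<K}. \<integral>\<^sup>+g. ennreal (\<phi> k (g k)) \<partial>?P)"
    by (subst nn_integral_sum)
       (auto simp only: nn_integral_const P.emeasure_space_1 mult_1_right intro!: meas[simplified])
  also have "(\<Sum>k\<in>{1..<K}. \<integral>\<^sup>+g. ennreal (\<phi> k (g k)) \<partial>?P) = (\<Sum>k\<in>{1..<K}. \<integral>\<^sup>+y. ennreal (\<phi> k y) \<partial>S)"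
    using S \<phi>_meas by (intro sum.cong refl nn_integral_component_PiM) auto
  finally show ?thesis .
qed

lemma nmese_less_top_if_memoryless:
  assumes S: "prob_space S" and K: "K \<ge> 1"
    and \<phi>_nonneg: "\<And>k y. k < K \<Longrightarrow> \<phi> k y \<ge> 0"
    and \<phi>_meas: "\<And>k. k < K \<Longrightarrow> \<phi> k \<in> borel_measurable S"
    and \<phi>_finite: "\<And>k. k < K \<Longrightarrow> (\<integral>\<^sup>+y. ennreal (\<phi> k y) \<partial>S) < \<infinity>"
    and decodes: "AE g1 in S. AE g in PiM {1..<K} (\<lambda>_. S).
        snd (remaining (real K * Reff) (\<lambda>k. \<phi> k ((g(0 := g1)) k)) (g(0 := g1)) K) \<le> 0"
  shows "nmese K Reff S < \<infinity>"
proof -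
  interpret S: prob_space S by (rule S)
  let ?C = "\<Sum>k\<in>{1..<K}. \<integral>\<^sup>+y. ennreal (\<phi> k y) \<partial>S"
  have "(\<integral>\<^sup>+g1. Jstar K (real K * Reff) S g1 \<partial>S) \<le> (\<integral>\<^sup>+g1. ennreal (\<phi> 0 g1) + ?C \<partial>S)"
    using decodes
    by (intro nn_integral_mono_AE, elim eventually_mono)
       (rule Jstar_le_memoryless_cost[OF S K \<phi>_nonneg \<phi>_meas])
  also have "\<dots> = (\<integral>\<^sup>+g1. ennreal (\<phi> 0 g1) \<partial>S) + ?C"
    using K \<phi>_meas[of 0] by (simp add: nn_integral_add S.emeasure_space_1)
  also have "\<dots> < \<infinity>"
    using K \<phi>_finite by (simp add: less_top)
  finally show ?thesis
    unfolding nmese_def by (simp add: ennreal_mult_less_top)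
qed

section \<open>Slot laws without mass at zero\<close>

lemma emeasure_pair_measure_Times3:
  assumes "prob_space M0" "prob_space M1" "prob_space M2"
    and "A \<in> sets M0" "B \<in> sets M1" "C \<in> sets M2"
  shows "emeasure (M0 \<Otimes>\<^sub>M (M1 \<Otimes>\<^sub>M M2)) (A \<times> (B \<times> C)) = emeasure M0 A * (emeasure M1 B * emeasure M2 C)"
proof -
  interpret M2: prob_space M2 by fact
  interpret M12: prob_space "M1 \<Otimes>\<^sub>M M2" using assms by (intro prob_space_pair)
  show ?thesis
    using assms by (simp add: M12.emeasure_pair_measure_Times M2.emeasure_pair_measure_Times)
qed

lemma AE_pair_measureI:
  assumes "sigma_finite_measure M1" "sigma_finite_measure M2"
    and [measurable]: "Measurable.pred M1 P" "Measurable.pred M2 Q"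
    and P: "AE x in M1. P x" and Q: "AE y in M2. Q y"
  shows "AE z in M1 \<Otimes>\<^sub>M M2. P (fst z) \<and> Q (snd z)"
proof -
  interpret pair_sigma_finite M1 M2 using assms(1,2) by (simp add: pair_sigma_finite_def)
  show ?thesis
    by (rule AE_pair_measure) (use P Q in \<open>auto elim!: eventually_mono\<close>)
qed

locale snr_law =
  fixes D :: "real measure"
  assumes prob_space: "prob_space D" and sets_eq: "sets D = sets borel"
    and null_nonpos: "emeasure D {..0} = 0"
begin

lemma space_eq: "space D = UNIV"
  using sets_eq_imp_space_eq[OF sets_eq] by simp

lemma AE_pos: "AE x in D. x > 0"
  using null_nonpos sets_eq by (intro AE_I'[of "{..0}"]) (auto simp: null_sets_def space_eq)

lemma prob_space_square: "prob_space (D \<Otimes>\<^sub>M D)"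
  using prob_space by (intro prob_space_pair)

lemma prob_space_relay_slot: "prob_space (relay_slot D)"
  unfolding relay_slot_def using prob_space prob_space_square by (intro prob_space_pair)

lemma prob_space_no_relay_slot: "prob_space (no_relay_slot D)"
  unfolding no_relay_slot_def by (rule prob_space_pair[OF prob_space_return prob_space_square]) simp

lemma sigma_finite: "sigma_finite_measure D"
  by (rule prob_space_imp_sigma_finite[OF prob_space])

lemma AE_pos_square: "AE y in D \<Otimes>\<^sub>M D. fst y > 0 \<and> snd y > 0"
proof -
  note [measurable_cong] = sets_eq
  show ?thesis by (rule AE_pair_measureI[OF sigma_finite sigma_finite _ _ AE_pos AE_pos]) measurable
qed

lemma AE_relay_slot: "AE y in relay_slot D. fst y > 0 \<and> fst (snd y) > 0 \<and> snd (snd y) > 0"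
proof -
  note [measurable_cong] = sets_eq
  show ?thesis
    unfolding relay_slot_def
    by (rule AE_pair_measureI[OF sigma_finite prob_space_imp_sigma_finite[OF prob_space_square]
          _ _ AE_pos AE_pos_square]) measurable
qed

lemma AE_no_relay_slot: "AE y in no_relay_slot D. fst y = 0 \<and> fst (snd y) > 0 \<and> snd (snd y) > 0"
proof -
  note [measurable_cong] = sets_eq
  have "AE x in return borel 0. x = (0::real)"
    by (simp add: AE_return)
  moreover have "sigma_finite_measure (return borel (0::real))"
    by (intro prob_space_imp_sigma_finite prob_space_return) simp
  ultimately show ?thesis
    unfolding no_relay_slot_def
    by (intro AE_pair_measureI[OF _ prob_space_imp_sigma_finite[OF prob_space_square] _ _ _ AE_pos_square])
       (simp_all, measurable)
qed

lemma emeasure_relay_slot_Times: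
  assumes "A \<in> sets borel" "B \<in> sets borel" "C \<in> sets borel"
  shows "emeasure (relay_slot D) (A \<times> (B \<times> C)) = emeasure D A * (emeasure D B * emeasure D C)"
  unfolding relay_slot_def using assms sets_eq prob_space
  by (intro emeasure_pair_measure_Times3) auto

lemma emeasure_no_relay_slot_destination:
  "emeasure (no_relay_slot D) {y \<in> space (no_relay_slot D). fst (snd y) \<le> t} = emeasure D {..t}"
proof -
  have "{y \<in> space (no_relay_slot D). fst (snd y) \<le> t} = UNIV \<times> ({..t} \<times> UNIV)"
    by (auto simp: no_relay_slot_def space_pair_measure space_eq)
  moreover have "emeasure (return borel (0::real) \<Otimes>\<^sub>M (D \<Otimes>\<^sub>M D)) (UNIV \<times> ({..t} \<times> UNIV))
      = emeasure (return borel (0::real)) UNIV * (emeasure D {..t} * emeasure D UNIV)"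
    by (rule emeasure_pair_measure_Times3[OF prob_space_return prob_space prob_space])
       (simp_all add: sets_eq)
  ultimately show ?thesis
    using prob_space.emeasure_space_1[OF prob_space] space_eq by (simp add: no_relay_slot_def)
qed

lemma nn_integral_inverse_gains_less_top:
  assumes cdf: "\<And>t. 0 \<le> t \<Longrightarrow> t \<le> 1 \<Longrightarrow> emeasure D {..t} \<le> ennreal t"
  shows "(\<integral>\<^sup>+y. ennreal (1 / source_gain y) \<partial>relay_slot D) < \<infinity>"
    and "(\<integral>\<^sup>+y. ennreal (1 / phase2_gain y) \<partial>relay_slot D) < \<infinity>"
proof -
  note [measurable_cong] = sets_eq
  have [measurable_cong]: "sets (relay_slot D) = sets (D \<Otimes>\<^sub>M (D \<Otimes>\<^sub>M D))"
    by (simp add: relay_slot_def)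
  have square: "emeasure D {..t} * emeasure D {..t} \<le> ennreal (1 * t\<^sup>2)" if t: "0 \<le> t" "t \<le> 1" for t
  proof -
    have "emeasure D {..t} * emeasure D {..t} \<le> ennreal t * ennreal t"
      using cdf[OF t] by (intro mult_mono) auto
    then show ?thesis using t by (simp add: ennreal_mult'[symmetric] power2_eq_square)
  qed
  have one: "emeasure D UNIV = 1"
    using prob_space.emeasure_space_1[OF prob_space] space_eq by simp
  show "(\<integral>\<^sup>+y. ennreal (1 / source_gain y) \<partial>relay_slot D) < \<infinity>"
  proof (rule nn_integral_inverse_less_top[OF prob_space_relay_slot _ zero_le_one])
    fix t :: real assume t: "0 \<le> t" "t \<le> 1"
    have "{y \<in> space (relay_slot D). source_gain y \<le> t} = {..t} \<times> ({..t} \<times> UNIV)"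
      by (auto simp: source_gain_def relay_slot_def space_pair_measure space_eq)
    then show "emeasure (relay_slot D) {y \<in> space (relay_slot D). source_gain y \<le> t} \<le> ennreal (1 * t\<^sup>2)"
      using square[OF t] by (simp add: emeasure_relay_slot_Times one)
  qed (unfold source_gain_def[abs_def], measurable)
  show "(\<integral>\<^sup>+y. ennreal (1 / phase2_gain y) \<partial>relay_slot D) < \<infinity>"
  proof (rule nn_integral_inverse_less_top[OF prob_space_relay_slot _ zero_le_one])
    fix t :: real assume t: "0 \<le> t" "t \<le> 1"
    have "{y \<in> space (relay_slot D). phase2_gain y \<le> t} = UNIV \<times> ({..t} \<times> {..t})"
      by (auto simp: phase2_gain_def relay_slot_def space_pair_measure space_eq)
    then show "emeasure (relay_slot D) {y \<in> space (relay_slot D). phase2_gain y \<le> t} \<le> ennreal (1 * t\<^sup>2)"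
      using square[OF t] by (simp add: emeasure_relay_slot_Times one)
  qed (unfold phase2_gain_def[abs_def], measurable)
qed

end

context snr_law
begin

lemma nmese_relay_less_top:
  assumes cdf: "\<And>t. 0 \<le> t \<Longrightarrow> t \<le> 1 \<Longrightarrow> emeasure D {..t} \<le> ennreal t"
    and K: "K \<ge> 2" and Reff: "Reff > 0"
  shows "nmese K Reff (relay_slot D) < \<infinity>"
proof -
  let ?S = "relay_slot D" and ?B = "real K * Reff"
  note [measurable_cong] = sets_eq
  have [measurable_cong]: "sets ?S = sets (D \<Otimes>\<^sub>M (D \<Otimes>\<^sub>M D))" by (simp add: relay_slot_def)
  define \<phi> where "\<phi> k = (if k = 0 then inversion_power ?B \<circ> source_gain
      else if k = 1 then inversion_power ?B \<circ> phase2_gain else (\<lambda>_. 0))" for k :: nat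
  have B: "?B > 0" using K Reff by simp
  have meas [measurable]: "source_gain \<in> borel_measurable ?S" "phase2_gain \<in> borel_measurable ?S"
    unfolding source_gain_def[abs_def] phase2_gain_def[abs_def] by measurable
  have "(\<integral>\<^sup>+y. ennreal (inversion_power ?B (source_gain y)) \<partial>?S) < \<infinity>"
    using B meas(1) nn_integral_inverse_gains_less_top(1)[OF cdf]
    by (rule nn_integral_inversion_power_less_top[OF less_imp_le])
  moreover have "(\<integral>\<^sup>+y. ennreal (inversion_power ?B (phase2_gain y)) \<partial>?S) < \<infinity>"
    using B meas(2) nn_integral_inverse_gains_less_top(2)[OF cdf]
    by (rule nn_integral_inversion_power_less_top[OF less_imp_le])
  ultimately have finite: "(\<integral>\<^sup>+y. ennreal (\<phi> k y) \<partial>?S) < \<infinity>" for k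
    by (simp add: \<phi>_def)
  have decodes: "snd (remaining ?B (\<lambda>k. \<phi> k ((g(0 := g1)) k)) (g(0 := g1)) K) \<le> 0"
    if g1: "fst g1 > 0" "fst (snd g1) > 0" and g: "fst (snd (g 1)) > 0" "snd (snd (g 1)) > 0" for g1 g
  proof -
    let ?g = "g(0 := g1)" and ?P = "\<lambda>k. \<phi> k ((g(0 := g1)) k)"
    obtain a0 b0 c0 where g1_eq: "g1 = (a0, b0, c0)" by (cases g1)
    obtain a1 b1 c1 where g_eq: "g 1 = (a1, b1, c1)" by (cases "g 1")
    have "remaining ?B ?P ?g K = remaining ?B ?P ?g (Suc (Suc 0))"
      using K by (intro remaining_eq_if_zero_powers) (auto simp: \<phi>_def)
    moreover have "snd (remaining ?B ?P ?g (Suc (Suc 0))) \<le> 0"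
      by (rule remaining_two_slot_relay[OF B])
         (use g1 g g1_eq g_eq in \<open>auto simp: \<phi>_def source_gain_def phase2_gain_def\<close>)
    ultimately show ?thesis by simp
  qed
  have "AE g in PiM {1..<K} (\<lambda>_. ?S). fst (snd (g 1)) > 0 \<and> snd (snd (g 1)) > 0"
    using K prob_space_relay_slot AE_relay_slot
    by (intro AE_PiM_component[where P = "\<lambda>y. fst (snd y) > 0 \<and> snd (snd y) > 0"])
       (auto elim: eventually_mono)
  then have "AE g1 in ?S. AE g in PiM {1..<K} (\<lambda>_. ?S).
      snd (remaining ?B (\<lambda>k. \<phi> k ((g(0 := g1)) k)) (g(0 := g1)) K) \<le> 0"
    using AE_relay_slot by (elim eventually_mono) (rule decodes; simp)
  moreover have "\<phi> k \<in> borel_measurable ?S" for k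
    unfolding \<phi>_def by (cases "k = 0"; cases "k = 1") simp_all
  ultimately show ?thesis
    using K prob_space_relay_slot finite B
    by (intro nmese_less_top_if_memoryless) (auto simp: \<phi>_def inversion_power_nonneg)
qed

lemma nmese_no_relay_less_top:
  assumes cdf: "\<And>t. 0 \<le> t \<Longrightarrow> t \<le> 1 \<Longrightarrow> emeasure D {..t} \<le> ennreal (t\<^sup>2)"
    and K: "K \<ge> 1" and Reff: "Reff > 0"
  shows "nmese K Reff (no_relay_slot D) < \<infinity>"
proof -
  let ?S = "no_relay_slot D" and ?B = "real K * Reff"
  note [measurable_cong] = sets_eq
  have [measurable_cong]: "sets ?S = sets (return borel (0::real) \<Otimes>\<^sub>M (D \<Otimes>\<^sub>M D))" by (simp only: no_relay_slot_def)
  define \<phi> where "\<phi> k = (if k = 0 then \<lambda>y::snr. inversion_power ?B (fst (snd y)) else (\<lambda>_. 0))" for k :: nat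
  have B: "?B > 0" using K Reff by simp
  have "(\<integral>\<^sup>+y. ennreal (1 / fst (snd y)) \<partial>?S) < \<infinity>"
    using prob_space_no_relay_slot cdf
    by (intro nn_integral_inverse_less_top[of _ _ 1]) (auto simp: emeasure_no_relay_slot_destination)
  then have "(\<integral>\<^sup>+y. ennreal (inversion_power ?B (fst (snd y))) \<partial>?S) < \<infinity>"
    using B by (intro nn_integral_inversion_power_less_top) auto
  then have finite: "(\<integral>\<^sup>+y. ennreal (\<phi> k y) \<partial>?S) < \<infinity>" for k
    by (simp add: \<phi>_def)
  have decodes: "snd (remaining ?B (\<lambda>k. \<phi> k ((g(0 := g1)) k)) (g(0 := g1)) K) \<le> 0"
    if "fst (snd g1) > 0" for g1 g
  proof -
    let ?g = "g(0 := g1)" and ?P = "\<lambda>k. \<phi> k ((g(0 := g1)) k)"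
    have "remaining ?B ?P ?g K = remaining ?B ?P ?g (Suc 0)"
      using K by (intro remaining_eq_if_zero_powers) (auto simp: \<phi>_def)
    moreover have "snd (remaining ?B ?P ?g (Suc 0)) \<le> 0"
      using B that by (cases g1) (simp add: \<phi>_def ln_inversion_power Let_def)
    ultimately show ?thesis by simp
  qed
  have "AE g1 in ?S. AE g in PiM {1..<K} (\<lambda>_. ?S).
      snd (remaining ?B (\<lambda>k. \<phi> k ((g(0 := g1)) k)) (g(0 := g1)) K) \<le> 0"
    using AE_no_relay_slot by (rule eventually_mono) (rule AE_I2, rule decodes, simp)
  moreover have "\<phi> k \<in> borel_measurable ?S" for k
    unfolding \<phi>_def by (cases "k = 0") simp_all
  ultimately show ?thesis
    using K prob_space_no_relay_slot finite B
    by (intro nmese_less_top_if_memoryless) (auto simp: \<phi>_def inversion_power_nonneg)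
qed

end

section \<open>Converse: without relaying, only the first slot is usable\<close>

lemma nn_integral_eq_top_if_ge_inverse:
  assumes [measurable]: "gam \<in> borel_measurable M"
    and inf: "(\<integral>\<^sup>+y. ennreal (1 / gam y) \<partial>M) = \<infinity>" and a: "a > 0"
    and le: "AE y in M. ennreal (a / gam y) \<le> f y"
  shows "(\<integral>\<^sup>+y. f y \<partial>M) = \<infinity>"
proof -
  have "\<infinity> = (\<integral>\<^sup>+y. ennreal a * ennreal (1 / gam y) \<partial>M)"
    using a inf by (subst nn_integral_cmult) auto
  also have "\<dots> \<le> (\<integral>\<^sup>+y. f y \<partial>M)"
    using le a by (intro nn_integral_mono_AE) (auto elim!: eventually_mono simp: ennreal_mult'[symmetric])
  finally show ?thesis by (simp add: top_unique)
qed

lemma nn_integral_if_top_ge: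
  assumes [measurable]: "Measurable.pred M P"
    and finite_case: "(AE x in M. \<not> P x) \<Longrightarrow> c \<le> (\<integral>\<^sup>+x. f x \<partial>M)"
  shows "c \<le> (\<integral>\<^sup>+x. (if P x then \<infinity> else f x) \<partial>M)"
proof -
  let ?A = "{x \<in> space M. P x}"
  have A: "?A \<in> sets M" by measurable
  show ?thesis
  proof (cases "emeasure M ?A = 0")
    case True
    then have "AE x in M. x \<notin> ?A" using A by (intro AE_not_in) (simp add: null_sets_def)
    then have "AE x in M. \<not> P x" using AE_space by eventually_elim auto
    then have "c \<le> (\<integral>\<^sup>+x. f x \<partial>M)" by (rule finite_case)
    also have "\<dots> \<le> (\<integral>\<^sup>+x. (if P x then \<infinity> else f x) \<partial>M)"
      by (intro nn_integral_mono) auto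
    finally show ?thesis .
  next
    case False
    have "(\<integral>\<^sup>+x. \<infinity> * indicator ?A x \<partial>M) \<le> (\<integral>\<^sup>+x. (if P x then \<infinity> else f x) \<partial>M)"
      by (intro nn_integral_mono) (auto simp: indicator_def)
    then show ?thesis using False A by (simp add: nn_integral_cmult_indicator top_unique)
  qed
qed

lemma borel_measurable_PiM_drop_coordinate:
  assumes f: "f \<in> borel_measurable (PiM (insert n I) (\<lambda>_. M))" and n: "n \<notin> I" and y0: "y0 \<in> space M"
    and indep: "\<And>x y. f (x(n := y)) = f x"
  shows "f \<in> borel_measurable (PiM I (\<lambda>_. M))"
proof -
  have "(\<lambda>x. f (x(n := y0))) \<in> borel_measurable (PiM I (\<lambda>_. M))"
    using n y0 by (intro measurable_compose[OF measurable_fun_upd[where J = I] f]) auto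
  then show ?thesis by (simp add: indep)
qed

text \<open>\<open>G\<close> is the rate collected before the last slot \<open>n\<close>. Charging \<open>\<infinity>\<close> on the null set where
  decoding fails makes the decoding constraint hold on every slice \<open>x(n := y)\<close>.\<close>
lemma nn_integral_last_slot_ge:
  fixes M :: "'a measure" and gam :: "'a \<Rightarrow> real" and q :: "nat \<Rightarrow> (nat \<Rightarrow> 'a) \<Rightarrow> real"
  assumes M: "prob_space M" and [measurable]: "gam \<in> borel_measurable M"
    and gam_pos: "AE y in M. gam y > 0" and inf: "(\<integral>\<^sup>+y. ennreal (1 / gam y) \<partial>M) = \<infinity>"
    and I: "finite I" "n \<notin> I"
    and q_meas: "\<And>k. k \<le> n \<Longrightarrow> q k \<in> borel_measurable (PiM (insert n I) (\<lambda>_. M))"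
    and q_nonneg: "\<And>k g. k \<le> n \<Longrightarrow> q k g \<ge> 0"
    and q_indep: "\<And>k x y. k < n \<Longrightarrow> q k (x(n := y)) = q k x"
    and G_meas: "G \<in> borel_measurable (PiM (insert n I) (\<lambda>_. M))" and G_indep: "\<And>x y. G (x(n := y)) = G x"
    and decodes: "AE g in PiM (insert n I) (\<lambda>_. M). b \<le> G g + ln (1 + q n g * gam (g n))"
  shows "(\<integral>\<^sup>+x. (if b - G x > 0 then \<infinity> else ennreal (\<Sum>k<n. q k x)) \<partial>PiM I (\<lambda>_. M))
       \<le> (\<integral>\<^sup>+g. ennreal (\<Sum>k\<le>n. q k g) \<partial>PiM (insert n I) (\<lambda>_. M))"
proof -
  interpret M: prob_space M by (rule M)
  interpret product_sigma_finite "\<lambda>_. M" by unfold_locales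
  let ?PI = "PiM I (\<lambda>_. M)" and ?PJ = "PiM (insert n I) (\<lambda>_. M)"
  define N where "N = {g \<in> space ?PJ. \<not> b \<le> G g + ln (1 + q n g * gam (g n))}"
  define h where "h g = ennreal (\<Sum>k\<le>n. q k g) + (if g \<in> N then \<infinity> else 0)" for g
  have [measurable]: "q n \<in> borel_measurable ?PJ" using q_meas by simp
  note [measurable] = G_meas
  have N_sets: "N \<in> sets ?PJ" unfolding N_def by measurable
  have h_meas: "h \<in> borel_measurable ?PJ"
    unfolding h_def using N_sets q_meas by (intro borel_measurable_add borel_measurable_sum) auto
  have "(\<integral>\<^sup>+g. ennreal (\<Sum>k\<le>n. q k g) \<partial>?PJ) = (\<integral>\<^sup>+g. h g \<partial>?PJ)"
    using decodes by (intro nn_integral_cong_AE) (auto simp: h_def N_def elim!: eventually_mono)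
  also have "\<dots> = (\<integral>\<^sup>+x. (\<integral>\<^sup>+y. h (x(n := y)) \<partial>M) \<partial>?PI)"
    by (rule product_nn_integral_insert[OF I h_meas])
  finally have split: "(\<integral>\<^sup>+g. ennreal (\<Sum>k\<le>n. q k g) \<partial>?PJ) = (\<integral>\<^sup>+x. (\<integral>\<^sup>+y. h (x(n := y)) \<partial>M) \<partial>?PI)" .
  have earlier: "(\<Sum>k<n. q k x) \<le> (\<Sum>k\<le>n. q k (x(n := y)))" for x y
    using q_nonneg[of n "x(n := y)"] by (simp add: q_indep sum.atMost_Suc lessThan_Suc_atMost[symmetric])
  have "(if b - G x > 0 then \<infinity> else ennreal (\<Sum>k<n. q k x)) \<le> (\<integral>\<^sup>+y. h (x(n := y)) \<partial>M)"
    if x: "x \<in> space ?PI" for x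
  proof (cases "b - G x > 0")
    case False
    have "ennreal (\<Sum>k<n. q k x) = (\<integral>\<^sup>+y. ennreal (\<Sum>k<n. q k x) \<partial>M)" by (simp add: M.emeasure_space_1)
    also have "\<dots> \<le> (\<integral>\<^sup>+y. h (x(n := y)) \<partial>M)"
      using earlier by (intro nn_integral_mono) (auto simp: h_def intro: order_trans[OF ennreal_leI])
    finally show ?thesis using False by simp
  next
    case True
    have "(\<integral>\<^sup>+y. h (x(n := y)) \<partial>M) = \<infinity>"
    proof (rule nn_integral_eq_top_if_ge_inverse[OF _ inf])
      show "exp (b - G x) - 1 > 0" using True by simp
      show "AE y in M. ennreal ((exp (b - G x) - 1) / gam y) \<le> h (x(n := y))"
        using gam_pos AE_space
      proof eventually_elim
        case (elim y)
        show ?case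
        proof (cases "x(n := y) \<in> N")
          case False
          have "x(n := y) \<in> space ?PJ"
            using x elim(2) by (auto simp: space_PiM intro!: PiE_fun_upd)
          with False have "b - G x \<le> ln (1 + q n (x(n := y)) * gam y)"
            by (simp add: N_def G_indep)
          then have "(exp (b - G x) - 1) / gam y \<le> q n (x(n := y))"
            using elim(1) q_nonneg[of n] by (simp add: ln_ge_iff pos_divide_le_eq add_pos_nonneg)
          also have "\<dots> \<le> (\<Sum>k\<le>n. q k (x(n := y)))"
            using q_nonneg by (intro member_le_sum) auto
          finally show ?thesis by (simp add: h_def ennreal_leI False)
        qed (simp add: h_def)
      qed
    qed simp
    then show ?thesis by simp
  qed
  then show ?thesis
    unfolding split by (intro nn_integral_mono) auto
qed

lemma borel_measurable_sum_ln_rate: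
  fixes p \<gamma> :: "nat \<Rightarrow> 'a \<Rightarrow> real"
  assumes "\<And>k. k < n \<Longrightarrow> p k \<in> borel_measurable M" "\<And>k. k < n \<Longrightarrow> \<gamma> k \<in> borel_measurable M"
  shows "(\<lambda>g. \<Sum>k<n. ln (1 + p k g * \<gamma> k g)) \<in> borel_measurable M"
proof (rule borel_measurable_sum)
  fix k assume "k \<in> {..<n}"
  then have [measurable]: "p k \<in> borel_measurable M" "\<gamma> k \<in> borel_measurable M" using assms by auto
  show "(\<lambda>g. ln (1 + p k g * \<gamma> k g)) \<in> borel_measurable M" by measurable
qed

text \<open>Induction on the horizon: whatever is left for the last slot costs infinite expected
  power, since \<open>E[1/\<gamma>] = \<infinity>\<close> there.\<close>
lemma nn_integral_energy_ge_first_slot: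
  fixes M :: "'a measure" and gam :: "'a \<Rightarrow> real" and q :: "nat \<Rightarrow> (nat \<Rightarrow> 'a) \<Rightarrow> real"
  assumes M: "prob_space M" and gam_meas [measurable]: "gam \<in> borel_measurable M"
    and gam_pos: "AE y in M. gam y > 0" and inf: "(\<integral>\<^sup>+y. ennreal (1 / gam y) \<partial>M) = \<infinity>"
    and gam0: "gam0 > 0"
    and causal: "\<And>k g g'. (\<And>j. 1 \<le> j \<Longrightarrow> j \<le> k \<Longrightarrow> g j = g' j) \<Longrightarrow> q k g = q k g'"
    and n: "1 \<le> n"
  shows "(\<And>k g. k < n \<Longrightarrow> q k g \<ge> 0) \<Longrightarrow>
    (\<And>k. k < n \<Longrightarrow> q k \<in> borel_measurable (PiM {1..<n} (\<lambda>_. M))) \<Longrightarrow>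
    (AE g in PiM {1..<n} (\<lambda>_. M). b \<le> (\<Sum>k<n. ln (1 + q k g * (if k = 0 then gam0 else gam (g k))))) \<Longrightarrow>
    ennreal ((exp b - 1) / gam0) \<le> (\<integral>\<^sup>+g. ennreal (\<Sum>k<n. q k g) \<partial>PiM {1..<n} (\<lambda>_. M))"
  using n
proof (induction n rule: nat_induct_at_least)
  case base
  let ?u = "(\<lambda>_. undefined) :: nat \<Rightarrow> 'a"
  have P: "PiM {1..<1} (\<lambda>_. M) = count_space {?u}" by (simp add: PiM_empty)
  from base(3) have "b \<le> ln (1 + q 0 ?u * gam0)" unfolding P by (simp add: AE_count_space)
  then have "(exp b - 1) / gam0 \<le> q 0 ?u"
    using gam0 base(1)[of 0] by (simp add: ln_ge_iff pos_divide_le_eq add_pos_nonneg)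
  then show ?case unfolding P by (simp add: nn_integral_count_space_finite ennreal_leI)
next
  case (Suc n)
  interpret M: prob_space M by (rule M)
  define I where "I = {1..<n}"
  let ?PI = "PiM I (\<lambda>_. M)" and ?PJ = "PiM (insert n I) (\<lambda>_. M)"
  define Gam where "Gam k g = (if k = 0 then gam0 else gam (g k))" for k and g :: "nat \<Rightarrow> 'a"
  define G where "G g = (\<Sum>k<n. ln (1 + q k g * Gam k g))" for g
  have J: "{1..<Suc n} = insert n I" "n \<notin> I" "finite I" using Suc.hyps by (auto simp: I_def)
  obtain y0 where y0: "y0 \<in> space M" using M.not_empty by auto
  have q_indep: "q k (x(n := y)) = q k x" if "k < n" for k x y
    using that by (intro causal) auto
  have Gam_meas: "(\<lambda>g. Gam k g) \<in> borel_measurable (PiM J (\<lambda>_. M))" if "k \<noteq> 0 \<Longrightarrow> k \<in> J" for k J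
    using that by (cases "k = 0")
      (auto simp: Gam_def
        intro!: measurable_compose[OF measurable_component_singleton[where M = "\<lambda>_. M"] gam_meas])
  have q_meas: "q k \<in> borel_measurable ?PJ" if "k \<le> n" for k
    using Suc.prems(2)[of k] that unfolding J by simp
  have q_meas_I: "q k \<in> borel_measurable ?PI" if k: "k < n" for k
    by (rule borel_measurable_PiM_drop_coordinate[OF q_meas J(2) y0]) (use k q_indep in auto)
  have G_meas: "G \<in> borel_measurable (PiM J (\<lambda>_. M))"
    if "\<And>k. k < n \<Longrightarrow> q k \<in> borel_measurable (PiM J (\<lambda>_. M))" "I \<subseteq> J" for J
    unfolding G_def using that by (intro borel_measurable_sum_ln_rate Gam_meas) (auto simp: I_def)
  have "(\<integral>\<^sup>+x. (if b - G x > 0 then \<infinity> else ennreal (\<Sum>k<n. q k x)) \<partial>?PI)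
      \<le> (\<integral>\<^sup>+g. ennreal (\<Sum>k<Suc n. q k g) \<partial>PiM {1..<Suc n} (\<lambda>_. M))"
    unfolding J lessThan_Suc_atMost
  proof (rule nn_integral_last_slot_ge[OF M gam_meas gam_pos inf J(3,2) q_meas])
    show "G \<in> borel_measurable ?PJ" using q_meas by (intro G_meas) auto
    show "G (x(n := y)) = G x" for x y
      unfolding G_def using q_indep by (intro sum.cong) (auto simp: Gam_def)
    show "AE g in ?PJ. b \<le> G g + ln (1 + q n g * gam (g n))"
      using Suc.prems(3) Suc.hyps unfolding J by (auto simp: G_def Gam_def elim!: eventually_mono)
  qed (use Suc.prems(1) q_indep in auto)
  moreover have "ennreal ((exp b - 1) / gam0) \<le> (\<integral>\<^sup>+x. (if b - G x > 0 then \<infinity> else ennreal (\<Sum>k<n. q k x)) \<partial>?PI)"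
  proof (rule nn_integral_if_top_ge)
    show "Measurable.pred ?PI (\<lambda>x. b - G x > 0)" using G_meas[OF q_meas_I] by measurable
    assume "AE x in ?PI. \<not> b - G x > 0"
    then show "ennreal ((exp b - 1) / gam0) \<le> (\<integral>\<^sup>+x. ennreal (\<Sum>k<n. q k x) \<partial>?PI)"
      using Suc.prems(1) q_meas_I unfolding I_def
      by (intro Suc.IH) (auto simp: G_def Gam_def elim!: eventually_mono)
  qed
  ultimately show ?case by (rule order_trans[rotated])
qed

lemma remaining_no_relay:
  assumes "\<And>k. k < m \<Longrightarrow> fst (g k) = 0" "B > 0"
  shows "remaining B P g m = (B, B - (\<Sum>k<m. ln (1 + P k * fst (snd (g k)))))"
  using assms(1)
proof (induction m)
  case (Suc m)
  obtain a c d where "g m = (a, c, d)" by (cases "g m")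
  moreover have "a = 0" using Suc.prems[of m] calculation by simp
  ultimately show ?case using Suc assms(2) by (simp add: Let_def)
qed simp

context snr_law
begin

lemma Jstar_no_relay_ge:
  assumes inf: "(\<integral>\<^sup>+y. ennreal (1 / fst (snd y)) \<partial>no_relay_slot D) = \<infinity>"
    and K: "K \<ge> 1" and B: "B > 0" and g1: "fst g1 = 0" "fst (snd g1) > 0"
  shows "ennreal ((exp B - 1) / fst (snd g1)) \<le> Jstar K B (no_relay_slot D) g1"
  unfolding Jstar_def
proof (rule INF_greatest)
  let ?S = "no_relay_slot D" and ?P = "PiM {1..<K} (\<lambda>_. no_relay_slot D)"
  note [measurable_cong] = sets_eq
  have [measurable_cong]: "sets ?S = sets (return borel (0::real) \<Otimes>\<^sub>M (D \<Otimes>\<^sub>M D))"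
    by (simp only: no_relay_slot_def)
  fix p assume "p \<in> {p. admissible K B ?S g1 p}"
  then have p: "\<forall>k<K. \<forall>g. p k g \<ge> 0" "causal_policy p" "\<forall>k<K. p k \<in> borel_measurable (PiM {..<K} (\<lambda>_. ?S))"
      "AE g in ?P. snd (remaining B (\<lambda>k. p k (g(0 := g1))) (g(0 := g1)) K) \<le> 0"
    by (simp_all add: admissible_def)
  have upd: "(\<lambda>g. g(0 := g1)) \<in> measurable ?P (PiM {..<K} (\<lambda>_. ?S))"
    using K prob_space_no_relay_slot
    by (intro measurable_fun_upd[where J = "{1..<K}"]) (auto simp: prob_space.not_empty
        space_pair_measure no_relay_slot_def space_eq)
  have no_relay: "AE g in ?P. \<forall>k\<in>{1..<K}. fst (g k) = 0"
    using prob_space_no_relay_slot AE_no_relay_slot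
    by (intro eventually_ball_finite ballI AE_PiM_component[where P = "\<lambda>y. fst y = 0"])
       (auto elim: eventually_mono)
  show "ennreal ((exp B - 1) / fst (snd g1)) \<le> (\<integral>\<^sup>+g. ennreal (\<Sum>k<K. p k (g(0 := g1))) \<partial>?P)"
  proof (rule nn_integral_energy_ge_first_slot[OF prob_space_no_relay_slot _ _ inf g1(2) _ K])
    show "AE y in ?S. fst (snd y) > 0" using AE_no_relay_slot by (auto elim: eventually_mono)
    show "p k (g(0 := g1)) = p k (g'(0 := g1))" if "\<And>j. 1 \<le> j \<Longrightarrow> j \<le> k \<Longrightarrow> g j = g' j" for k g g'
    proof -
      have "\<forall>j\<le>k. (g(0 := g1)) j = (g'(0 := g1)) j" using that by (simp add: Suc_le_eq)
      then show ?thesis using p(2) unfolding causal_policy_def by blast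
    qed
    show "(\<lambda>g. p k (g(0 := g1))) \<in> borel_measurable ?P" if "k < K" for k
      using p(3) that by (intro measurable_compose[OF upd]) auto
    show "AE g in ?P. B \<le> (\<Sum>k<K. ln (1 + p k (g(0 := g1)) * (if k = 0 then fst (snd g1) else fst (snd (g k)))))"
      using p(4) no_relay
    proof eventually_elim
      case (elim g)
      have "remaining B (\<lambda>k. p k (g(0 := g1))) (g(0 := g1)) K
          = (B, B - (\<Sum>k<K. ln (1 + p k (g(0 := g1)) * fst (snd ((g(0 := g1)) k)))))"
        using elim(2) g1(1) B by (intro remaining_no_relay) auto
      with elim(1) show ?case
        by (simp add: if_distrib[of "\<lambda>y. fst (snd y)"] cong: if_cong)
    qed
  qed (use p(1) in auto)
qed

lemma nmese_no_relay_eq_top: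
  assumes c: "c > 0" and cdf: "\<And>t. 0 \<le> t \<Longrightarrow> t \<le> 1 \<Longrightarrow> ennreal (c * t) \<le> emeasure D {..t}"
    and K: "K \<ge> 1" and Reff: "Reff > 0"
  shows "nmese K Reff (no_relay_slot D) = \<infinity>"
proof -
  let ?S = "no_relay_slot D" and ?B = "real K * Reff"
  note [measurable_cong] = sets_eq
  have [measurable_cong]: "sets ?S = sets (return borel (0::real) \<Otimes>\<^sub>M (D \<Otimes>\<^sub>M D))"
    by (simp only: no_relay_slot_def)
  have B: "?B > 0" using K Reff by simp
  have inf: "(\<integral>\<^sup>+y. ennreal (1 / fst (snd y)) \<partial>?S) = \<infinity>"
    using prob_space_no_relay_slot AE_no_relay_slot c cdf
    by (intro nn_integral_inverse_eq_top) (auto elim: eventually_mono simp: emeasure_no_relay_slot_destination)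
  have "\<infinity> = (\<integral>\<^sup>+g1. ennreal (exp ?B - 1) * ennreal (1 / fst (snd g1)) \<partial>?S)"
    using B inf K by (subst nn_integral_cmult) (auto simp: ennreal_mult_top)
  also have "\<dots> \<le> (\<integral>\<^sup>+g1. Jstar K ?B ?S g1 \<partial>?S)"
    using AE_no_relay_slot
  proof (intro nn_integral_mono_AE, elim eventually_mono)
    fix g1 :: snr assume g1: "fst g1 = 0 \<and> fst (snd g1) > 0 \<and> snd (snd g1) > 0"
    have "ennreal (exp ?B - 1) * ennreal (1 / fst (snd g1)) = ennreal ((exp ?B - 1) / fst (snd g1))"
      using B by (simp add: ennreal_mult'[symmetric])
    also have "\<dots> \<le> Jstar K ?B ?S g1"
      using inf K B g1 by (intro Jstar_no_relay_ge) auto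
    finally show "ennreal (exp ?B - 1) * ennreal (1 / fst (snd g1)) \<le> Jstar K ?B ?S g1" .
  qed
  finally show ?thesis
    using K by (simp add: nmese_def top_unique)
qed

end

lemma ncx2_prob_space:
  assumes "ncx2_dist v lam D"
  shows "prob_space D" "sets D = sets borel"
  using assms unfolding ncx2_dist_def by blast+

lemma ncx2_emeasure_atMost_le:
  assumes D: "ncx2_dist (2 * real (Suc m)) lam D" and t: "0 \<le> t" "t \<le> 1"
  shows "emeasure D {..t} \<le> ennreal (t ^ Suc m)"
proof -
  interpret prob_space D by (rule ncx2_prob_space[OF D])
  have "emeasure D {..t} = ennreal (measure D {..t})"
    by (rule emeasure_eq_measure)
  also have "\<dots> \<le> ennreal (t ^ Suc m)"
    using ncx2_cdf_le_power[OF D t] by (rule ennreal_leI)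
  finally show ?thesis .
qed

lemma ncx2_snr_law:
  assumes D: "ncx2_dist (2 * real (Suc m)) lam D"
  shows "snr_law D"
  using ncx2_emeasure_atMost_le[OF D, of 0] by (intro snr_law.intro ncx2_prob_space[OF D]) simp_all

lemma nmese_ncx2_2:
  assumes D: "ncx2_dist 2 lam D" and Reff: "Reff > 0"
  shows "(\<forall>K::nat. K \<ge> 1 \<longrightarrow> nmese K Reff (no_relay_slot D) = \<infinity>) \<and>
         (\<forall>K::nat. K \<ge> 2 \<longrightarrow> nmese K Reff (relay_slot D) < \<infinity>)"
proof -
  have D1: "ncx2_dist (2 * real (Suc 0)) lam D" using D by simp
  interpret snr_law D by (rule ncx2_snr_law[OF D1])
  interpret D: prob_space D by (rule prob_space)
  define c where "c = exp (- lam / 2) * exp (- 1 / 2) / 4"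
  have lin_lower: "ennreal (c * t) \<le> emeasure D {..t}" if "0 \<le> t" "t \<le> 1" for t
    unfolding D.emeasure_eq_measure c_def using ncx2_2_cdf_ge_linear[OF D that] by (rule ennreal_leI)
  have lin_upper: "emeasure D {..t} \<le> ennreal t" if "0 \<le> t" "t \<le> 1" for t
    using ncx2_emeasure_atMost_le[OF D1 that] by simp
  show ?thesis
    by (intro conjI allI impI nmese_no_relay_eq_top[OF _ lin_lower] nmese_relay_less_top[OF lin_upper])
       (use Reff in \<open>auto simp: c_def\<close>)
qed

lemma nmese_ncx2_higher:
  assumes s: "s \<ge> 2" and D: "ncx2_dist (2 * real s) lam D" and Reff: "Reff > 0"
  shows "(\<forall>K::nat. K \<ge> 1 \<longrightarrow> nmese K Reff (no_relay_slot D) < \<infinity>) \<and>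
         (\<forall>K::nat. K \<ge> 2 \<longrightarrow> nmese K Reff (relay_slot D) < \<infinity>)"
proof -
  obtain m where m: "s = Suc m" "m \<ge> 1" using s by (cases s) auto
  with D have D': "ncx2_dist (2 * real (Suc m)) lam D" by simp
  interpret snr_law D by (rule ncx2_snr_law[OF D'])
  have quad_upper: "emeasure D {..t} \<le> ennreal (t\<^sup>2)" and lin_upper: "emeasure D {..t} \<le> ennreal t"
    if t: "0 \<le> t" "t \<le> 1" for t
  proof -
    have "t ^ Suc m \<le> t ^ 2" using t m by (intro power_decreasing) auto
    moreover have "t\<^sup>2 \<le> t" using t by (simp add: power2_eq_square mult_left_le_one_le)
    ultimately have "t ^ Suc m \<le> t\<^sup>2" "t\<^sup>2 \<le> t" by simp_all
    then show "emeasure D {..t} \<le> ennreal (t\<^sup>2)" "emeasure D {..t} \<le> ennreal t"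
      using ncx2_emeasure_atMost_le[OF D' t] by (auto elim!: order_trans intro!: ennreal_leI)
  qed
  show ?thesis
    by (intro conjI allI impI nmese_no_relay_less_top[OF quad_upper] nmese_relay_less_top[OF lin_upper])
       (use Reff in auto)
qed

theorem corollary2:
  fixes Reff :: real
  assumes "Reff > 0"
  shows
    "(\<forall>D. ncx2_dist 2 0 D \<longrightarrow>
        (\<forall>K::nat. K \<ge> 1 \<longrightarrow> nmese K Reff (no_relay_slot D) = \<infinity>) \<and>
        (\<forall>K::nat. K \<ge> 2 \<longrightarrow> nmese K Reff (relay_slot D) < \<infinity>))
   \<and> (\<forall>lam D. lam > 0 \<longrightarrow> ncx2_dist 2 lam D \<longrightarrow>
        (\<forall>K::nat. K \<ge> 1 \<longrightarrow> nmese K Reff (no_relay_slot D) = \<infinity>) \<and>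
        (\<forall>K::nat. K \<ge> 2 \<longrightarrow> nmese K Reff (relay_slot D) < \<infinity>))
   \<and> (\<forall>(s::nat) lam D. s \<ge> 2 \<longrightarrow> lam \<ge> 0 \<longrightarrow> ncx2_dist (2 * real s) lam D \<longrightarrow>
        (\<forall>K::nat. K \<ge> 1 \<longrightarrow> nmese K Reff (no_relay_slot D) < \<infinity>) \<and>
        (\<forall>K::nat. K \<ge> 2 \<longrightarrow> nmese K Reff (relay_slot D) < \<infinity>))"
  using nmese_ncx2_2[OF _ assms] nmese_ncx2_higher[OF _ _ assms] by blast

end
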